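(* Let $V$ be a vector space over a field $K$ of characteristic zero and $\mathrm{Dend}(V)$ the free dendriform algebra on $V$. Then $H^{Dend}_1(\mathrm{Dend}(V))\cong V$ and $H^{Dend}_n(\mathrm{Dend}(V))=0$ for all $n>1$.
   Context: A dendriform algebra is a vector space $E$ with bilinear $\prec,\succ$ satisfying (i) $(a\prec b)\prec c=a\prec(b\prec c)+a\prec(b\succ c)$, (ii) $(a\succ b)\prec c=a\succ(b\prec c)$, (iii) $(a\prec b)\succ c+(a\succ b)\succ c=a\succ(b\succ c)$; $a*b:=a\prec b+a\succ b$. Its chain complex: $C^{Dend}_n(E)=K[\{1,\dots,n\}]\otimes E^{\otimes n}$ with $d=-\sum_{i=1}^{n-1}(-1)^id_i$, where $d_i(r\otimes x_1\otimes\cdots\otimes x_n)=d_i(r)\otimes x_1\otimes\cdots\otimes(x_i\circ_i^rx_{i+1})\otimes\cdots\otimes x_n$, with $d_i(r)=r-1$ if $i\le r-1$, $d_i(r)=r$ if $i\ge r$, and $\circ_i^r=*$ if $i<r-1$ or $i>r$, $\circ_i^r=\succ$ if $i=r-1$, $\circ_i^r=\prec$ if $i=r$. $H^{Dend}_n(E)$ is the $n$-th homology of this complex ($n\ge1$). The free dendriform algebra $\mathrm{Dend}(V)$ is characterized by the usual universal property with respect to linear maps from $V$ (it is $\bigoplus_{n\ge1}K[Y_n]\otimes V^{\otimes n}$, $Y_n$ the planar binary trees with $n$ internal vertices). *)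

theory Defs
  imports Main "HOL-Library.Poly_Mapping" "HOL-Library.Tree"
begin

text \<open>A vector space over the field 'k with basis indexed by a set S :: 'a set is modelled
  as the subspace  fspan S = { p :: 'a =>0 'k . Poly_Mapping.keys p <= S }  of the free vector space.\<close>

definition smult :: "'k::comm_ring_1 \<Rightarrow> ('a \<Rightarrow>\<^sub>0 'k) \<Rightarrow> ('a \<Rightarrow>\<^sub>0 'k)" where
  "smult c p = Poly_Mapping.map (\<lambda>x. c * x) p"

definition fspan :: "'a set \<Rightarrow> ('a \<Rightarrow>\<^sub>0 'k::zero) set" where
  "fspan S = {p. Poly_Mapping.keys p \<subseteq> S}"

definition lin_ext :: "('a \<Rightarrow> ('c \<Rightarrow>\<^sub>0 'k::comm_ring_1)) \<Rightarrow> ('a \<Rightarrow>\<^sub>0 'k) \<Rightarrow> ('c \<Rightarrow>\<^sub>0 'k)" where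
  "lin_ext g p = (\<Sum>t\<in>Poly_Mapping.keys p. smult (Poly_Mapping.lookup p t) (g t))"

definition linear_on :: "('a \<Rightarrow>\<^sub>0 'k::comm_ring_1) set \<Rightarrow> (('a \<Rightarrow>\<^sub>0 'k) \<Rightarrow> ('c \<Rightarrow>\<^sub>0 'k)) \<Rightarrow> bool" where
  "linear_on S f \<longleftrightarrow> (\<forall>x\<in>S. \<forall>y\<in>S. f (x + y) = f x + f y) \<and> (\<forall>c. \<forall>x\<in>S. f (smult c x) = smult c (f x))"

text \<open>A (dendriform) algebra E with basis indexed by Bas :: 'e set is given by the structure
  maps prec, succ on basis elements (extended bilinearly).
  C_n(E) = K[{1..n}] (x) E^{(x)n} has basis {1..n} x Bas^n, basis element (r, [x_1,...,x_n]).\<close>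

definition dend_C :: "'e set \<Rightarrow> nat \<Rightarrow> ((nat \<times> 'e list) \<Rightarrow>\<^sub>0 'k::zero) set" where
  "dend_C Bas n = fspan {(r, xs). 1 \<le> r \<and> r \<le> n \<and> length xs = n \<and> set xs \<subseteq> Bas}"

definition dend_circ ::
  "('e \<Rightarrow> 'e \<Rightarrow> ('e \<Rightarrow>\<^sub>0 'k::comm_ring_1)) \<Rightarrow> ('e \<Rightarrow> 'e \<Rightarrow> ('e \<Rightarrow>\<^sub>0 'k)) \<Rightarrow> nat \<Rightarrow> nat \<Rightarrow> 'e \<Rightarrow> 'e \<Rightarrow> ('e \<Rightarrow>\<^sub>0 'k)" where
  "dend_circ prec succ i r a b =
     (if i + 1 = r then succ a b
      else if i = r then prec a b
      else prec a b + succ a b)"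

definition dend_di_r :: "nat \<Rightarrow> nat \<Rightarrow> nat" where
  "dend_di_r i r = (if i + 1 \<le> r then r - 1 else r)"

text \<open>The face map d_i on a basis element (r, [x_1,...,x_n]), 1 <= i <= n-1
  (list positions are 0-based, so x_i = xs ! (i-1)).\<close>
definition dend_face ::
  "('e \<Rightarrow> 'e \<Rightarrow> ('e \<Rightarrow>\<^sub>0 'k::comm_ring_1)) \<Rightarrow> ('e \<Rightarrow> 'e \<Rightarrow> ('e \<Rightarrow>\<^sub>0 'k)) \<Rightarrow> nat \<Rightarrow> nat \<times> 'e list \<Rightarrow> ((nat \<times> 'e list) \<Rightarrow>\<^sub>0 'k)" where
  "dend_face prec succ i rx =
     (case rx of (r, xs) \<Rightarrow>
        lin_ext (\<lambda>t. Poly_Mapping.single (dend_di_r i r, take (i - 1) xs @ t # drop (i + 1) xs) 1)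
                (dend_circ prec succ i r (xs ! (i - 1)) (xs ! i)))"

definition dend_d_basis ::
  "('e \<Rightarrow> 'e \<Rightarrow> ('e \<Rightarrow>\<^sub>0 'k::comm_ring_1)) \<Rightarrow> ('e \<Rightarrow> 'e \<Rightarrow> ('e \<Rightarrow>\<^sub>0 'k)) \<Rightarrow> nat \<times> 'e list \<Rightarrow> ((nat \<times> 'e list) \<Rightarrow>\<^sub>0 'k)" where
  "dend_d_basis prec succ rx =
     - (\<Sum>i\<in>{1..<length (snd rx)}. smult ((-1) ^ i) (dend_face prec succ i rx))"

definition dend_d ::
  "('e \<Rightarrow> 'e \<Rightarrow> ('e \<Rightarrow>\<^sub>0 'k::comm_ring_1)) \<Rightarrow> ('e \<Rightarrow> 'e \<Rightarrow> ('e \<Rightarrow>\<^sub>0 'k)) \<Rightarrow> ((nat \<times> 'e list) \<Rightarrow>\<^sub>0 'k) \<Rightarrow> ((nat \<times> 'e list) \<Rightarrow>\<^sub>0 'k)" where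
  "dend_d prec succ = lin_ext (dend_d_basis prec succ)"

text \<open>n-cycles and n-boundaries; H_n = Z_n / B_n.\<close>
definition dend_Z where
  "dend_Z Bas prec succ n = {c \<in> dend_C Bas n. dend_d prec succ c = 0}"

definition dend_B where
  "dend_B Bas prec succ n = dend_d prec succ ` dend_C Bas (Suc n)"

text \<open>V has basis B :: 'b set.  Dend(V) = (+)_{n>=1} K[Y_n] (x) V^{(x)n} has as basis the planar
  binary trees with n >= 1 internal vertices, the internal vertices decorated (read in order)
  by the basis elements x_1 ... x_n of V.  With t = t^l \/ t^r the grafting (new root),
  Loday's formulas:  t < s = t^l \/ (t^r * s),  t > s = (t * s^l) \/ s^r,
  where * = < + > and the one-leaf tree | is a unit for *.\<close>

definition graft_map :: "('a tree \<Rightarrow> 'a tree) \<Rightarrow> ('a tree \<Rightarrow>\<^sub>0 'k::comm_ring_1) \<Rightarrow> ('a tree \<Rightarrow>\<^sub>0 'k)" where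
  "graft_map f = lin_ext (\<lambda>t. Poly_Mapping.single (f t) 1)"

fun dtree_star :: "'a tree \<Rightarrow> 'a tree \<Rightarrow> ('a tree \<Rightarrow>\<^sub>0 'k::comm_ring_1)" where
  "dtree_star Leaf y = Poly_Mapping.single y 1"
| "dtree_star (Node l a r) Leaf = Poly_Mapping.single (Node l a r) 1"
| "dtree_star (Node l a r) (Node l' b r') =
     graft_map (\<lambda>t. Node l a t) (dtree_star r (Node l' b r'))
   + graft_map (\<lambda>t. Node t b r') (dtree_star (Node l a r) l')"

definition dtree_prec :: "'a tree \<Rightarrow> 'a tree \<Rightarrow> ('a tree \<Rightarrow>\<^sub>0 'k::comm_ring_1)" where
  "dtree_prec x y = (case x of Leaf \<Rightarrow> 0 | Node l a r \<Rightarrow> graft_map (\<lambda>t. Node l a t) (dtree_star r y))"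

definition dtree_succ :: "'a tree \<Rightarrow> 'a tree \<Rightarrow> ('a tree \<Rightarrow>\<^sub>0 'k::comm_ring_1)" where
  "dtree_succ x y = (case y of Leaf \<Rightarrow> 0 | Node l b r \<Rightarrow> graft_map (\<lambda>t. Node t b r) (dtree_star x l))"

definition dend_basis :: "'b set \<Rightarrow> 'b tree set" where
  "dend_basis B = {t. t \<noteq> Leaf \<and> set_tree t \<subseteq> B}"

end

(* The chain complex of the free dendriform algebra has an explicit contracting homotopy h.
   For a basis chain (r; t_1, ..., t_n) write the r-th tree as t_r = Node a v b.  If a is not
   the leaf, then t_r = a > Node Leaf v b, and h (with the sign (-1)^(r+1)) splits t_r into
   these two factors, the marked position moving to r + 1; if r = 1 and a is the leaf, then
   t_1 = Node Leaf v Leaf < b and h splits t_1 into these two factors; otherwise h vanishes.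
   The dendriform axioms give the simplicial identities, hence d d = 0, and a computation on
   the faces gives d h + h d = id - P, where P projects onto the chains (1; Node Leaf v Leaf)
   of degree 1.  So every n-cycle with n > 1 is a boundary, while in degree 1 (where every
   chain is a cycle) the boundaries are exactly the kernel of Node Leaf v Leaf |-> v. *)

theory Submission
  imports Defs
begin

subsection \<open>Linear combinations\<close>

lemma lookup_smult [simp]: "Poly_Mapping.lookup (smult c p) x = c * Poly_Mapping.lookup p x"
  unfolding smult_def by transfer (simp add: when_def)

lemma smult_add_right: "smult c (p + q) = smult c p + smult c q"
  by (rule poly_mapping_eqI) (simp add: lookup_add algebra_simps)

lemma smult_add_left: "smult (c + d) p = smult c p + smult d p"
  by (rule poly_mapping_eqI) (simp add: lookup_add algebra_simps)

lemma smult_smult [simp]: "smult c (smult d p) = smult (c * d) p"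
  by (rule poly_mapping_eqI) (simp add: algebra_simps)

lemma smult_one [simp]: "smult 1 p = p"
  by (rule poly_mapping_eqI) simp

lemma smult_zero_left [simp]: "smult 0 p = 0"
  by (rule poly_mapping_eqI) simp

lemma smult_zero_right [simp]: "smult c 0 = 0"
  by (rule poly_mapping_eqI) simp

lemma smult_uminus_right: "smult c (- p) = - smult c p"
  by (rule poly_mapping_eqI) simp

lemma smult_uminus_left: "smult (- c) p = - smult c p"
  by (rule poly_mapping_eqI) simp

lemma smult_minus_one [simp]: "smult (-1) p = - p"
  by (rule poly_mapping_eqI) simp

lemma smult_neg_one_power: "smult ((-1) ^ n) p = (if even n then p else - p)"
  by simp

lemma smult_sum: "smult c (sum f I) = (\<Sum>i\<in>I. smult c (f i))"
  by (rule poly_mapping_eqI) (simp add: lookup_sum sum_distrib_left)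

lemma smult_single: "smult c (Poly_Mapping.single t d) = Poly_Mapping.single t (c * d)"
  by (rule poly_mapping_eqI) (simp add: lookup_single when_def)

lemma keys_smult: "Poly_Mapping.keys (smult c p) \<subseteq> Poly_Mapping.keys p"
  by (auto simp: in_keys_iff)

lemma lin_ext_superset:
  assumes "finite S" "Poly_Mapping.keys p \<subseteq> S"
  shows "lin_ext g p = (\<Sum>t\<in>S. smult (Poly_Mapping.lookup p t) (g t))"
  unfolding lin_ext_def
  by (rule sum.mono_neutral_left) (use assms in \<open>auto simp: in_keys_iff\<close>)

lemma lin_ext_add: "lin_ext g (p + q) = lin_ext g p + lin_ext g q"
proof -
  let ?S = "Poly_Mapping.keys p \<union> Poly_Mapping.keys q"
  let ?ext = "\<lambda>u. \<Sum>t\<in>?S. smult (Poly_Mapping.lookup u t) (g t)"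
  have "lin_ext g (p + q) = ?ext (p + q)"
    using keys_add[of p q] by (intro lin_ext_superset) auto
  also have "\<dots> = ?ext p + ?ext q"
    by (simp add: lookup_add smult_add_left sum.distrib)
  also have "\<dots> = lin_ext g p + lin_ext g q"
    by (subst (1 2) lin_ext_superset[where S = ?S]) auto
  finally show ?thesis .
qed

lemma lin_ext_zero [simp]: "lin_ext g 0 = 0"
  by (simp add: lin_ext_def)

lemma lin_ext_smult: "lin_ext g (smult c p) = smult c (lin_ext g p)"
proof -
  have "lin_ext g (smult c p)
      = (\<Sum>t\<in>Poly_Mapping.keys p. smult (Poly_Mapping.lookup (smult c p) t) (g t))"
    by (rule lin_ext_superset) (auto simp: in_keys_iff)
  then show ?thesis by (simp add: lin_ext_def smult_sum)
qed

lemma lin_ext_uminus: "lin_ext g (- p) = - lin_ext g p"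
  using lin_ext_smult[of g "-1" p] by simp

lemma lin_ext_sum: "lin_ext g (sum f I) = (\<Sum>i\<in>I. lin_ext g (f i))"
  by (induction I rule: infinite_finite_induct) (auto simp: lin_ext_add)

lemma lin_ext_single [simp]: "lin_ext g (Poly_Mapping.single t c) = smult c (g t)"
  by (cases "c = 0") (auto simp: lin_ext_def)

lemma lin_ext_cong:
  "(\<And>t. t \<in> Poly_Mapping.keys p \<Longrightarrow> f t = g t) \<Longrightarrow> lin_ext f p = lin_ext g p"
  by (simp add: lin_ext_def)

lemma lin_ext_fun_add: "lin_ext (\<lambda>t. f t + g t) p = lin_ext f p + lin_ext g p"
  by (simp add: lin_ext_def smult_add_right sum.distrib)

lemma lin_ext_fun_smult: "lin_ext (\<lambda>t. smult c (f t)) p = smult c (lin_ext f p)"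
  by (simp add: lin_ext_def smult_sum mult.commute)

lemma lin_ext_fun_uminus: "lin_ext (\<lambda>t. - f t) p = - lin_ext f p"
  using lin_ext_fun_smult[of "-1" f p] by simp

lemma lin_ext_fun_zero [simp]: "lin_ext (\<lambda>t. 0) p = 0"
  by (simp add: lin_ext_def)

lemma lin_ext_fun_sum: "lin_ext (\<lambda>t. \<Sum>i\<in>I. f i t) p = (\<Sum>i\<in>I. lin_ext (f i) p)"
  by (induction I rule: infinite_finite_induct) (auto simp: lin_ext_fun_add)

lemma lin_ext_comp: "lin_ext f (lin_ext g p) = lin_ext (\<lambda>t. lin_ext f (g t)) p"
  by (simp only: lin_ext_def[of g] lin_ext_sum lin_ext_smult) (simp only: lin_ext_def)

lemma lin_ext_id: "lin_ext (\<lambda>t. Poly_Mapping.single t 1) p = p"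
proof (rule poly_mapping_eqI)
  fix x
  have "Poly_Mapping.lookup (lin_ext (\<lambda>t. Poly_Mapping.single t 1) p) x
      = (\<Sum>t\<in>Poly_Mapping.keys p. Poly_Mapping.lookup p t * (if t = x then 1 else 0))"
    by (simp add: lin_ext_def lookup_sum lookup_single when_def)
  also have "\<dots> = (\<Sum>t\<in>Poly_Mapping.keys p. if t = x then Poly_Mapping.lookup p x else 0)"
    by (rule sum.cong) auto
  also have "\<dots> = Poly_Mapping.lookup p x"
    by (simp add: in_keys_iff)
  finally show "Poly_Mapping.lookup (lin_ext (\<lambda>t. Poly_Mapping.single t 1) p) x
      = Poly_Mapping.lookup p x" .
qed

lemma smult_lin_ext_single:
  "smult c (lin_ext (\<lambda>t. Poly_Mapping.single (f t) 1) p)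
      = lin_ext (\<lambda>t. Poly_Mapping.single (f t) c) p"
  by (simp add: lin_ext_fun_smult[symmetric] smult_single)

lemma keys_lin_ext:
  "Poly_Mapping.keys (lin_ext g p) \<subseteq> (\<Union>t\<in>Poly_Mapping.keys p. Poly_Mapping.keys (g t))"
  unfolding lin_ext_def using keys_smult by (fastforce dest!: keys_sum[THEN subsetD])

lemma lin_ext_swap:
  "lin_ext (\<lambda>t. lin_ext (\<lambda>s. F t s) q) p = lin_ext (\<lambda>s. lin_ext (\<lambda>t. F t s) p) q"
  unfolding lin_ext_def smult_sum smult_smult
  by (subst sum.swap) (simp only: mult.commute)

subsection \<open>The dendriform chain complex\<close>

lemma alternating_double_sum_eq_0:
  fixes G :: "nat \<Rightarrow> nat \<Rightarrow> 'a::ab_group_add"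
  assumes "\<And>i j. 1 \<le> i \<Longrightarrow> i < j \<Longrightarrow> j < n \<Longrightarrow> G i j = G (j - 1) i"
  shows "(\<Sum>(i, j)\<in>{1..<n - 1} \<times> {1..<n}. if even (i + j) then G i j else - G i j) = 0"
proof -
  define f where "f = (\<lambda>(i, j). if even (i + j) then G i j else - G i j)"
  let ?P = "{1..<n - 1} \<times> {1..<n}"
  let ?below = "{p \<in> ?P. fst p < snd p}" and ?above = "{p \<in> ?P. \<not> fst p < snd p}"
  have "?P = ?below \<union> ?above" by auto
  then have "sum f ?P = sum f ?below + sum f ?above"
    by (metis (no_types, lifting) finite_SigmaI finite_atLeastLessThan finite_Un sum.union_disjoint
        Int_emptyI mem_Collect_eq)
  moreover have "sum f ?below = sum (\<lambda>p. - f p) ?above"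
  proof (rule sum.reindex_bij_witness
      [where j = "\<lambda>(i, j). (j - 1, i)" and i = "\<lambda>(i, j). (j, i + 1)"])
    fix a assume "a \<in> ?below"
    then obtain i j where ij: "a = (i, j)" "1 \<le> i" "i < j" "j < n" by auto
    then have "even (j - 1 + i) \<longleftrightarrow> \<not> even (i + j)" by auto
    then show "- f ((\<lambda>(i, j). (j - 1, i)) a) = f a"
      using ij assms[OF ij(2-4)] by (auto simp: f_def)
  qed auto
  ultimately show ?thesis by (simp add: f_def sum_negf)
qed

definition join_at :: "nat \<Rightarrow> 'a list \<Rightarrow> 'a \<Rightarrow> 'a list" where
  "join_at i xs t = take (i - 1) xs @ t # drop (i + 1) xs"

definition join3_at :: "nat \<Rightarrow> 'a list \<Rightarrow> 'a \<Rightarrow> 'a list" where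
  "join3_at i xs u = take (i - 1) xs @ u # drop (i + 2) xs"

lemma length_join_at: "1 \<le> i \<Longrightarrow> i < length xs \<Longrightarrow> length (join_at i xs t) = length xs - 1"
  by (simp add: join_at_def)

lemma nth_join_at:
  "1 \<le> i \<Longrightarrow> i < length xs \<Longrightarrow> k < length xs - 1 \<Longrightarrow>
   join_at i xs t ! k = (if k < i - 1 then xs ! k else if k = i - 1 then t else xs ! (k + 1))"
  by (auto simp: join_at_def nth_append min_def nth_Cons')

lemma set_join_at: "set (join_at i xs t) \<subseteq> insert t (set xs)"
  by (auto simp: join_at_def dest: in_set_takeD in_set_dropD)

lemma join_at_join_at_far:
  "1 \<le> i \<Longrightarrow> i + 1 < j \<Longrightarrow> j < length xs \<Longrightarrow>
   join_at i (join_at j xs t) s = join_at (j - 1) (join_at i xs s) t"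
  by (rule nth_equalityI) (auto simp: length_join_at nth_join_at)

lemma join_at_join_at_Suc:
  "1 \<le> i \<Longrightarrow> i + 1 < length xs \<Longrightarrow> join_at i (join_at (i + 1) xs t) s = join3_at i xs s"
  by (simp add: join_at_def join3_at_def min_def)

lemma join_at_join_at_same:
  "1 \<le> i \<Longrightarrow> i + 1 < length xs \<Longrightarrow> join_at i (join_at i xs t) s = join3_at i xs s"
  by (simp add: join_at_def join3_at_def min_def nth_append)

lemma dend_face_join_at:
  "dend_face p s i (r, xs) =
   lin_ext (\<lambda>t. Poly_Mapping.single (dend_di_r i r, join_at i xs t) 1)
     (dend_circ p s i r (xs ! (i - 1)) (xs ! i))"
  by (simp add: dend_face_def join_at_def)

lemma lin_ext_dend_face:
  "lin_ext g (dend_face p s j (r, xs)) =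
   lin_ext (\<lambda>t. g (dend_di_r j r, join_at j xs t)) (dend_circ p s j r (xs ! (j - 1)) (xs ! j))"
  unfolding dend_face_join_at lin_ext_comp by simp

lemma dend_d_basis_alt:
  "dend_d_basis p s (r, xs) =
   (\<Sum>i\<in>{1..<length xs}. smult ((-1) ^ (i + 1)) (dend_face p s i (r, xs)))"
  unfolding dend_d_basis_def sum_negf[symmetric]
  by (rule sum.cong) (simp_all add: smult_uminus_left[symmetric])

lemma dend_d_single: "dend_d p s (Poly_Mapping.single y c) = smult c (dend_d_basis p s y)"
  by (simp add: dend_d_def)

lemma keys_dend_C:
  "c \<in> dend_C Bas n \<Longrightarrow> k \<in> Poly_Mapping.keys c \<Longrightarrow>
   1 \<le> fst k \<and> fst k \<le> n \<and> length (snd k) = n \<and> set (snd k) \<subseteq> Bas"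
  by (cases k) (auto simp: dend_C_def fspan_def)

lemma dend_d_dend_C_1: "c \<in> dend_C Bas 1 \<Longrightarrow> dend_d p s c = 0"
proof -
  assume c: "c \<in> dend_C Bas 1"
  have "dend_d p s c = lin_ext (\<lambda>_. 0) c"
    unfolding dend_d_def
    by (rule lin_ext_cong) (use keys_dend_C[OF c] in \<open>auto simp: dend_d_basis_def\<close>)
  then show ?thesis by simp
qed

lemma dend_Z_1: "dend_Z Bas p s 1 = dend_C Bas 1"
  by (auto simp: dend_Z_def dend_d_dend_C_1)

lemma dend_di_r_far:
  "1 \<le> i \<Longrightarrow> i + 1 < j \<Longrightarrow> dend_di_r i (dend_di_r j r) = dend_di_r (j - 1) (dend_di_r i r)"
  by (auto simp: dend_di_r_def)

lemma dend_di_r_Suc: "dend_di_r i (dend_di_r (i + 1) r) = dend_di_r i (dend_di_r i r)"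
  by (auto simp: dend_di_r_def)

lemma dend_circ_far_left:
  "1 \<le> i \<Longrightarrow> i + 1 < j \<Longrightarrow> dend_circ p s i (dend_di_r j r) = dend_circ p s i r"
  by (intro ext) (auto simp: dend_di_r_def dend_circ_def)

lemma dend_circ_far_right:
  "1 \<le> i \<Longrightarrow> i + 1 < j \<Longrightarrow> dend_circ p s (j - 1) (dend_di_r i r) = dend_circ p s j r"
  by (intro ext) (auto simp: dend_di_r_def dend_circ_def)

lemma dend_circ_fun:
  "dend_circ p s i r = (if i + 1 = r then s else if i = r then p else (\<lambda>a b. p a b + s a b))"
  by (intro ext) (simp add: dend_circ_def)

lemma dend_circ_star: "i + 1 \<noteq> r \<Longrightarrow> i \<noteq> r \<Longrightarrow> dend_circ p s i r a b = p a b + s a b"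
  and dend_circ_succ: "i + 1 = r \<Longrightarrow> dend_circ p s i r a b = s a b"
  and dend_circ_prec: "i = r \<Longrightarrow> dend_circ p s i r a b = p a b"
  by (simp_all add: dend_circ_def)

locale dendriform_with_basis =
  fixes prec succ :: "'e \<Rightarrow> 'e \<Rightarrow> ('e \<Rightarrow>\<^sub>0 'k::comm_ring_1)" and Bas :: "'e set"
  assumes keys_prec: "x \<in> Bas \<Longrightarrow> y \<in> Bas \<Longrightarrow> Poly_Mapping.keys (prec x y) \<subseteq> Bas"
    and keys_succ: "x \<in> Bas \<Longrightarrow> y \<in> Bas \<Longrightarrow> Poly_Mapping.keys (succ x y) \<subseteq> Bas"
    and prec_assoc: "x \<in> Bas \<Longrightarrow> y \<in> Bas \<Longrightarrow> z \<in> Bas \<Longrightarrow>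
      lin_ext (\<lambda>w. prec w z) (prec x y) = lin_ext (prec x) (prec y z + succ y z)"
    and succ_prec_assoc: "x \<in> Bas \<Longrightarrow> y \<in> Bas \<Longrightarrow> z \<in> Bas \<Longrightarrow>
      lin_ext (\<lambda>w. prec w z) (succ x y) = lin_ext (succ x) (prec y z)"
    and succ_assoc: "x \<in> Bas \<Longrightarrow> y \<in> Bas \<Longrightarrow> z \<in> Bas \<Longrightarrow>
      lin_ext (\<lambda>w. succ w z) (prec x y + succ x y) = lin_ext (succ x) (succ y z)"
begin

abbreviation "circ \<equiv> dend_circ prec succ"
abbreviation "face \<equiv> dend_face prec succ"
abbreviation "d \<equiv> dend_d prec succ"

lemma star_assoc:
  assumes "x \<in> Bas" "y \<in> Bas" "z \<in> Bas"
  shows "lin_ext (\<lambda>w. prec w z + succ w z) (prec x y + succ x y)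
       = lin_ext (\<lambda>w. prec x w + succ x w) (prec y z + succ y z)"
  using prec_assoc[OF assms] succ_prec_assoc[OF assms] succ_assoc[OF assms]
  by (simp add: lin_ext_fun_add lin_ext_add ac_simps)

lemma keys_circ:
  assumes "a \<in> Bas" "b \<in> Bas"
  shows "Poly_Mapping.keys (circ i r a b) \<subseteq> Bas"
proof -
  have "Poly_Mapping.keys (prec a b + succ a b) \<subseteq> Bas"
    using keys_add[of "prec a b" "succ a b"] keys_prec[OF assms] keys_succ[OF assms] by blast
  then show ?thesis
    using keys_prec[OF assms] keys_succ[OF assms] by (simp add: dend_circ_def)
qed

text \<open>Each of the five positions of \<open>r\<close> relative to \<open>i, i + 1\<close> is one of the axioms
  (i)--(iii) or associativity of \<open>*\<close>.\<close>

lemma circ_assoc: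
  assumes "a \<in> Bas" "b \<in> Bas" "c \<in> Bas"
  shows "lin_ext (circ i (dend_di_r (i + 1) r) a) (circ (i + 1) r b c)
       = lin_ext (\<lambda>s. circ i (dend_di_r i r) s c) (circ i r a b)"
proof -
  consider "r < i" | "r = i" | "r = i + 1" | "r = i + 2" | "r > i + 2" by linarith
  then show ?thesis
    by cases (use prec_assoc[OF assms] succ_prec_assoc[OF assms] succ_assoc[OF assms]
        star_assoc[OF assms] in \<open>auto simp: dend_circ_fun dend_di_r_def\<close>)
qed

lemma keys_face:
  fixes i r :: nat
  assumes "1 \<le> i" "i < length xs" "set xs \<subseteq> Bas" "k \<in> Poly_Mapping.keys (face i (r, xs))"
  shows "fst k = dend_di_r i r \<and> length (snd k) = length xs - 1 \<and> set (snd k) \<subseteq> Bas"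
proof -
  have ab: "xs ! (i - 1) \<in> Bas" "xs ! i \<in> Bas"
    using assms by (auto simp: subset_iff)
  from assms(4) keys_lin_ext obtain t where t: "t \<in> Poly_Mapping.keys
      (circ i r (xs ! (i - 1)) (xs ! i))"
      "k = (dend_di_r i r, join_at i xs t)"
    unfolding dend_face_join_at by fastforce
  then have "t \<in> Bas" using keys_circ[OF ab] by blast
  then show ?thesis using t assms set_join_at[of i xs t] by (auto simp: length_join_at)
qed

lemma face_face_far:
  assumes "1 \<le> i" "i + 1 < j" "j < length xs"
  shows "lin_ext (face i) (face j (r, xs)) = lin_ext (face (j - 1)) (face i (r, xs))"
proof -
  have n1: "join_at j xs t ! (i - 1) = xs ! (i - 1)" "join_at j xs t ! i = xs ! i" for t
    using assms by (auto simp: nth_join_at)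
  have j2: "Suc (j - 1 - 1) = j - 1" "\<not> j - 1 - 1 < i - 1" "j - 1 - 1 \<noteq> i - 1"
    using assms by auto
  have n2: "join_at i xs s ! (j - 1 - 1) = xs ! (j - 1)" "join_at i xs s ! (j - 1) = xs ! j" for s
    using assms j2 by (auto simp: nth_join_at)
  let ?g = "\<lambda>s t. Poly_Mapping.single
        (dend_di_r (j - 1) (dend_di_r i r), join_at (j - 1) (join_at i xs s) t) 1"
  have "lin_ext (face i) (face j (r, xs))
      = lin_ext (\<lambda>t. lin_ext (\<lambda>s. ?g s t) (circ i r (xs ! (i - 1)) (xs ! i)))
          (circ j r (xs ! (j - 1)) (xs ! j))"
    unfolding lin_ext_dend_face
    by (rule lin_ext_cong)
      (use assms in \<open>simp add: dend_face_join_at n1 n1[simplified] dend_circ_far_left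
        dend_di_r_far join_at_join_at_far\<close>)
  also have "\<dots> = lin_ext (\<lambda>s. lin_ext (?g s) (circ j r (xs ! (j - 1)) (xs ! j)))
          (circ i r (xs ! (i - 1)) (xs ! i))"
    by (rule lin_ext_swap)
  also have "\<dots> = lin_ext (face (j - 1)) (face i (r, xs))"
    unfolding lin_ext_dend_face
    by (rule lin_ext_cong)
      (use assms in \<open>simp add: dend_face_join_at n2 n2[simplified] dend_circ_far_right
        dend_circ_far_right[simplified]\<close>)
  finally show ?thesis .
qed

lemma face_face_Suc:
  assumes "1 \<le> i" "i + 1 < length xs" "set xs \<subseteq> Bas"
  shows "lin_ext (face i) (face (i + 1) (r, xs)) = lin_ext (face i) (face i (r, xs))"
proof -
  have abc: "xs ! (i - 1) \<in> Bas" "xs ! i \<in> Bas" "xs ! (i + 1) \<in> Bas"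
    using assms by (auto simp: subset_iff)
  have n1: "join_at (i + 1) xs t ! (i - 1) = xs ! (i - 1)" "join_at (i + 1) xs t ! i = t" for t
    using assms by (auto simp: nth_join_at)
  have n2: "join_at i xs s ! (i - 1) = s" "join_at i xs s ! i = xs ! (i + 1)" for s
    using assms by (auto simp: nth_join_at)
  let ?g = "\<lambda>u. Poly_Mapping.single (dend_di_r i (dend_di_r i r), join3_at i xs u) 1"
  have "lin_ext (face i) (face (i + 1) (r, xs))
      = lin_ext (\<lambda>t. lin_ext ?g (circ i (dend_di_r (i + 1) r) (xs ! (i - 1)) t))
          (circ (i + 1) r (xs ! i) (xs ! (i + 1)))"
    unfolding lin_ext_dend_face add_diff_cancel_right'
    by (rule lin_ext_cong)
      (use assms in \<open>simp add: dend_face_join_at n1 n1[simplified] dend_di_r_Suc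
        dend_di_r_Suc[simplified] join_at_join_at_Suc join_at_join_at_Suc[simplified]\<close>)
  also have "\<dots> = lin_ext ?g (lin_ext (circ i (dend_di_r (i + 1) r) (xs ! (i - 1)))
          (circ (i + 1) r (xs ! i) (xs ! (i + 1))))"
    by (simp add: lin_ext_comp)
  also have "\<dots> = lin_ext ?g (lin_ext (\<lambda>s. circ i (dend_di_r i r) s (xs ! (i + 1)))
          (circ i r (xs ! (i - 1)) (xs ! i)))"
    by (simp only: circ_assoc[OF abc])
  also have "\<dots> = lin_ext (face i) (face i (r, xs))"
    unfolding lin_ext_dend_face lin_ext_comp
    by (rule lin_ext_cong)
      (use assms in \<open>simp add: dend_face_join_at n2 n2[simplified] join_at_join_at_same\<close>)
  finally show ?thesis .
qed

lemma d_face: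
  assumes "1 \<le> j" "j < length xs" "set xs \<subseteq> Bas"
  shows "d (face j (r, xs))
       = - (\<Sum>i\<in>{1..<length xs - 1}. smult ((-1) ^ i) (lin_ext (face i) (face j (r, xs))))"
proof -
  have "d (face j (r, xs))
      = lin_ext (\<lambda>k. - (\<Sum>i\<in>{1..<length xs - 1}. smult ((-1) ^ i) (face i k))) (face j (r, xs))"
    unfolding dend_d_def
    by (rule lin_ext_cong) (use keys_face[OF assms] in \<open>simp add: dend_d_basis_def\<close>)
  then show ?thesis
    by (simp add: lin_ext_fun_uminus lin_ext_fun_sum lin_ext_fun_smult)
qed

lemma d_d_basis:
  assumes "set xs \<subseteq> Bas"
  shows "d (dend_d_basis prec succ (r, xs)) = 0"
proof -
  let ?n = "length xs"
  define G where "G i j = lin_ext (face i) (face j (r, xs))" for i j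
  have "d (dend_d_basis prec succ (r, xs))
      = - (\<Sum>j\<in>{1..<?n}. smult ((-1) ^ j) (d (face j (r, xs))))"
    unfolding dend_d_basis_def dend_d_def by (simp add: lin_ext_uminus lin_ext_sum lin_ext_smult)
  also have "\<dots> = (\<Sum>j\<in>{1..<?n}. \<Sum>i\<in>{1..<?n - 1}. smult ((-1) ^ (i + j)) (G i j))"
    by (simp add: d_face assms G_def smult_sum smult_uminus_right sum_negf power_add mult.commute)
  also have "\<dots> = (\<Sum>(i, j)\<in>{1..<?n - 1} \<times> {1..<?n}. if even (i + j) then G i j else - G i j)"
    by (subst sum.swap) (simp add: sum.cartesian_product smult_neg_one_power)
  also have "\<dots> = 0"
  proof (rule alternating_double_sum_eq_0)
    fix i j assume ij: "1 \<le> i" "i < j" "j < ?n"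
    show "G i j = G (j - 1) i"
    proof (cases "j = i + 1")
      case True
      then show ?thesis using face_face_Suc[OF ij(1) _ assms, of r] ij by (simp add: G_def)
    next
      case False
      then show ?thesis using face_face_far[OF ij(1) _ ij(3), of r] ij by (simp add: G_def)
    qed
  qed
  finally show ?thesis .
qed

lemma d_d: "c \<in> dend_C Bas n \<Longrightarrow> d (d c) = 0"
  unfolding dend_d_def[of prec succ] lin_ext_comp
  by (subst lin_ext_cong[where g = "\<lambda>_. 0"])
    (auto simp flip: dend_d_def dest!: keys_dend_C intro: d_d_basis)

lemma d_dend_C: "c \<in> dend_C Bas (Suc n) \<Longrightarrow> d c \<in> dend_C Bas n"
proof -
  assume c: "c \<in> dend_C Bas (Suc n)"
  have "q \<in> {(r, xs). 1 \<le> r \<and> r \<le> n \<and> length xs = n \<and> set xs \<subseteq> Bas}"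
    if q: "q \<in> Poly_Mapping.keys (d c)" for q
  proof -
    obtain k where k: "k \<in> Poly_Mapping.keys c" "q \<in> Poly_Mapping.keys (dend_d_basis prec succ k)"
      using q keys_lin_ext[of "dend_d_basis prec succ" c] unfolding dend_d_def by blast
    obtain r xs where kr: "k = (r, xs)" by (cases k)
    have v: "1 \<le> r" "r \<le> Suc n" "length xs = Suc n" "set xs \<subseteq> Bas"
      using keys_dend_C[OF c k(1)] kr by auto
    have "q \<in> Poly_Mapping.keys (\<Sum>i\<in>{1..<length xs}. smult ((-1) ^ i) (face i (r, xs)))"
      using k(2) by (simp add: kr dend_d_basis_def)
    then obtain i where "i \<in> {1..<length xs}" "q \<in> Poly_Mapping.keys (face i (r, xs))"
      using keys_sum keys_smult by fast
    with keys_face[where i = i and xs = xs and r = r and k = q] v show ?thesis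
      by (cases q) (auto simp: dend_di_r_def)
  qed
  then show ?thesis unfolding dend_C_def fspan_def by blast
qed

lemma dend_B_subset_dend_Z: "dend_B Bas prec succ n \<subseteq> dend_Z Bas prec succ n"
  unfolding dend_B_def dend_Z_def using d_dend_C d_d by blast

end

subsection \<open>The free dendriform algebra on planar binary trees\<close>

lemma lin_ext_graft_map: "lin_ext h (graft_map f p) = lin_ext (\<lambda>t. h (f t)) p"
  unfolding graft_map_def lin_ext_comp by simp

lemma graft_map_lin_ext: "graft_map f (lin_ext g p) = lin_ext (\<lambda>t. graft_map f (g t)) p"
  unfolding graft_map_def lin_ext_comp ..

lemma graft_map_single [simp]:
  "graft_map f (Poly_Mapping.single t c) = Poly_Mapping.single (f t) c"
  unfolding graft_map_def by (simp add: smult_single)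

lemma keys_graft_map:
  fixes p :: "'a tree \<Rightarrow>\<^sub>0 'k::comm_ring_1"
  shows "Poly_Mapping.keys (graft_map f p) \<subseteq> f ` Poly_Mapping.keys p"
proof -
  have "Poly_Mapping.keys (graft_map f p)
      \<subseteq> (\<Union>t\<in>Poly_Mapping.keys p. Poly_Mapping.keys (Poly_Mapping.single (f t) (1::'k)))"
    unfolding graft_map_def by (rule keys_lin_ext)
  then show ?thesis by auto
qed

lemma dtree_star_Leaf [simp]: "dtree_star Leaf = (\<lambda>y. Poly_Mapping.single y 1)"
  by (rule ext) simp

lemma dtree_star_Leaf_right [simp]: "dtree_star x Leaf = Poly_Mapping.single x 1"
  by (cases x) auto

lemma dtree_prec_Node: "dtree_prec (Node l a r) y = graft_map (Node l a) (dtree_star r y)"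
  by (simp add: dtree_prec_def)

lemma dtree_succ_Node: "dtree_succ x (Node l b r) = graft_map (\<lambda>t. Node t b r) (dtree_star x l)"
  by (simp add: dtree_succ_def)

lemma dtree_prec_Leaf [simp]: "dtree_prec Leaf y = 0"
  by (simp add: dtree_prec_def)

lemma dtree_succ_Leaf [simp]: "dtree_succ x Leaf = 0"
  by (simp add: dtree_succ_def)

lemma dtree_prec_right_Leaf: "dtree_prec (Node l a Leaf) y = Poly_Mapping.single (Node l a y) 1"
  by (simp add: dtree_prec_Node)

lemma dtree_succ_left_Leaf: "dtree_succ x (Node Leaf b r) = Poly_Mapping.single (Node x b r) 1"
  by (simp add: dtree_succ_Node)

lemma dtree_star_eq_prec_succ:
  "x \<noteq> Leaf \<or> y \<noteq> Leaf \<Longrightarrow> dtree_star x y = dtree_prec x y + dtree_succ x y"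
  by (cases x; cases y) (auto simp: dtree_prec_Node dtree_succ_Node)

definition graft_root :: "'b \<Rightarrow> ('b tree \<Rightarrow>\<^sub>0 'k::comm_ring_1) \<Rightarrow> ('b tree \<Rightarrow>\<^sub>0 'k) \<Rightarrow> ('b tree \<Rightarrow>\<^sub>0 'k)"
  where "graft_root b P Q = lin_ext (\<lambda>s. lin_ext (\<lambda>t. Poly_Mapping.single (Node s b t) 1) Q) P"

lemma lin_ext_prec_Node:
  "lin_ext (dtree_prec (Node l a r)) p = graft_map (Node l a) (lin_ext (dtree_star r) p)"
  unfolding graft_map_lin_ext by (rule lin_ext_cong) (simp add: dtree_prec_Node)

lemma lin_ext_succ_Node:
  "lin_ext (\<lambda>w. dtree_succ w (Node l c r)) p
   = graft_map (\<lambda>t. Node t c r) (lin_ext (\<lambda>w. dtree_star w l) p)"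
  by (simp add: graft_map_lin_ext dtree_succ_Node)

lemma lin_ext_prec_graft_right:
  "lin_ext (\<lambda>w. dtree_prec w z) (graft_map (Node l a) q)
   = graft_map (Node l a) (lin_ext (\<lambda>s. dtree_star s z) q)"
  by (simp add: lin_ext_graft_map graft_map_lin_ext dtree_prec_Node)

lemma lin_ext_prec_graft_left:
  "lin_ext (\<lambda>w. dtree_prec w z) (graft_map (\<lambda>t. Node t b r) q) = graft_root b q (dtree_star r z)"
proof -
  have "lin_ext (\<lambda>w. dtree_prec w z) (graft_map (\<lambda>t. Node t b r) q)
      = lin_ext (\<lambda>s. graft_map (Node s b) (dtree_star r z)) q"
    by (simp add: lin_ext_graft_map dtree_prec_Node)
  then show ?thesis
    by (simp add: graft_map_def graft_root_def)
qed

lemma lin_ext_succ_graft_right: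
  "lin_ext (dtree_succ x) (graft_map (Node l b) q) = graft_root b (dtree_star x l) q"
proof -
  have "lin_ext (dtree_succ x) (graft_map (Node l b) q)
      = lin_ext (\<lambda>t. lin_ext (\<lambda>s. Poly_Mapping.single (Node s b t) 1) (dtree_star x l)) q"
    unfolding lin_ext_graft_map by (simp add: dtree_succ_Node graft_map_def)
  also have "\<dots> = graft_root b (dtree_star x l) q"
    unfolding graft_root_def by (rule lin_ext_swap)
  finally show ?thesis .
qed

lemma lin_ext_succ_graft_left:
  "lin_ext (dtree_succ x) (graft_map (\<lambda>t. Node t c r) q)
   = graft_map (\<lambda>t. Node t c r) (lin_ext (dtree_star x) q)"
  by (simp add: lin_ext_graft_map graft_map_lin_ext dtree_succ_Node)

lemma lin_ext_dtree_star_Node: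
  assumes x: "x = Node l a r" and y: "y = Node l' b r'" and z: "z = Node l'' c r''"
  shows "lin_ext (dtree_star x) (dtree_star y z :: 'b tree \<Rightarrow>\<^sub>0 'k::comm_ring_1)
       = graft_map (Node l a) (lin_ext (dtree_star r) (dtree_star y z))
         + (graft_root b (dtree_star x l') (dtree_star r' z)
            + graft_map (\<lambda>t. Node t c r'') (lin_ext (dtree_star x) (dtree_star y l'')))"
proof -
  have "lin_ext (dtree_star x) (dtree_star y z :: 'b tree \<Rightarrow>\<^sub>0 'k)
      = lin_ext (dtree_prec x) (dtree_star y z) + lin_ext (dtree_succ x) (dtree_star y z)"
    unfolding lin_ext_fun_add[symmetric]
    by (rule lin_ext_cong) (rule dtree_star_eq_prec_succ, simp add: x)
  moreover have "dtree_star y z = (dtree_prec y z + dtree_succ y z :: 'b tree \<Rightarrow>\<^sub>0 'k)"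
    by (rule dtree_star_eq_prec_succ) (simp add: y)
  ultimately show ?thesis
    by (simp only: x lin_ext_prec_Node lin_ext_add y z dtree_prec_Node dtree_succ_Node
        lin_ext_succ_graft_right lin_ext_succ_graft_left)
qed

lemma dtree_star_assoc:
  "lin_ext (\<lambda>w. dtree_star w z) (dtree_star x y :: 'b tree \<Rightarrow>\<^sub>0 'k::comm_ring_1)
   = lin_ext (dtree_star x) (dtree_star y z)"
proof (induction "size x + size y + size z" arbitrary: x y z rule: less_induct)
  case less
  show ?case
  proof (cases "x = Leaf \<or> y = Leaf \<or> z = Leaf")
    case True
    then consider "x = Leaf" | "y = Leaf" | "z = Leaf" by blast
    then show ?thesis
      by cases (simp_all add: lin_ext_id)
  next
    case False
    then obtain l a r l' b r' l'' c r'' where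
      x: "x = Node l a r" and y: "y = Node l' b r'" and z: "z = Node l'' c r''"
      by (metis tree.exhaust)
    let ?A = "graft_map (Node l a) (lin_ext (dtree_star r) (dtree_star y z))"
    let ?N = "graft_root b (dtree_star x l') (dtree_star r' z)"
    let ?C = "graft_map (\<lambda>t. Node t c r'') (lin_ext (dtree_star x) (dtree_star y l''))"
    have IH_right: "lin_ext (\<lambda>w. dtree_star w z) (dtree_star r y :: 'b tree \<Rightarrow>\<^sub>0 'k)
        = lin_ext (dtree_star r) (dtree_star y z)"
      using less[of r y z] x by simp
    have IH_left: "lin_ext (\<lambda>w. dtree_star w l'') (dtree_star x y :: 'b tree \<Rightarrow>\<^sub>0 'k)
        = lin_ext (dtree_star x) (dtree_star y l'')"
      using less[of x y l''] z by simp
    have prec_part: "lin_ext (\<lambda>w. dtree_prec w z) (dtree_star x y :: 'b tree \<Rightarrow>\<^sub>0 'k) = ?A + ?N"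
      by (simp only: x y dtree_star.simps lin_ext_add lin_ext_prec_graft_right
          lin_ext_prec_graft_left IH_right[unfolded x y])
    have succ_part: "lin_ext (\<lambda>w. dtree_succ w z) (dtree_star x y :: 'b tree \<Rightarrow>\<^sub>0 'k) = ?C"
      by (simp only: z lin_ext_succ_Node IH_left[unfolded z])
    have "lin_ext (\<lambda>w. dtree_star w z) (dtree_star x y :: 'b tree \<Rightarrow>\<^sub>0 'k)
        = lin_ext (\<lambda>w. dtree_prec w z) (dtree_star x y)
            + lin_ext (\<lambda>w. dtree_succ w z) (dtree_star x y)"
      unfolding lin_ext_fun_add[symmetric]
      by (rule lin_ext_cong) (rule dtree_star_eq_prec_succ, simp add: z)
    then have left: "lin_ext (\<lambda>w. dtree_star w z) (dtree_star x y :: 'b tree \<Rightarrow>\<^sub>0 'k) = ?A + ?N + ?C"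
      by (simp only: prec_part succ_part)
    show ?thesis
      unfolding left lin_ext_dtree_star_Node[OF x y z] by (rule add.assoc)
  qed
qed

lemma keys_dtree_star:
  "Poly_Mapping.keys (dtree_star x y :: 'b tree \<Rightarrow>\<^sub>0 'k::comm_ring_1)
     \<subseteq> {t. set_tree t \<subseteq> set_tree x \<union> set_tree y \<and> (t = Leaf \<longrightarrow> x = Leaf \<and> y = Leaf)}"
    (is "_ \<subseteq> ?S x y")
proof (induction x y rule: dtree_star.induct)
  case (3 l a r l' b r')
  have "Poly_Mapping.keys (graft_map (Node l a) (dtree_star r (Node l' b r') :: 'b tree \<Rightarrow>\<^sub>0 'k))
      \<subseteq> ?S (Node l a r) (Node l' b r')"
  proof
    fix t assume "t \<in> Poly_Mapping.keys (graft_map (Node l a)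
        (dtree_star r (Node l' b r') :: 'b tree \<Rightarrow>\<^sub>0 'k))"
    then obtain s where "s \<in> Poly_Mapping.keys (dtree_star r (Node l' b r') :: 'b tree \<Rightarrow>\<^sub>0 'k)"
        "t = Node l a s"
      using keys_graft_map by blast
    with 3(1) show "t \<in> ?S (Node l a r) (Node l' b r')" by auto
  qed
  moreover have "Poly_Mapping.keys (graft_map (\<lambda>t. Node t b r') (dtree_star (Node l a r) l')
        :: 'b tree \<Rightarrow>\<^sub>0 'k) \<subseteq> ?S (Node l a r) (Node l' b r')"
  proof
    fix t assume "t \<in> Poly_Mapping.keys (graft_map (\<lambda>t. Node t b r') (dtree_star (Node l a r) l')
        :: 'b tree \<Rightarrow>\<^sub>0 'k)"
    then obtain s where "s \<in> Poly_Mapping.keys (dtree_star (Node l a r) l' :: 'b tree \<Rightarrow>\<^sub>0 'k)"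
        "t = Node s b r'"
      using keys_graft_map by blast
    with 3(2) show "t \<in> ?S (Node l a r) (Node l' b r')" by auto
  qed
  moreover have "Poly_Mapping.keys (dtree_star (Node l a r) (Node l' b r') :: 'b tree \<Rightarrow>\<^sub>0 'k)
      \<subseteq> Poly_Mapping.keys (graft_map (Node l a) (dtree_star r (Node l' b r') :: 'b tree \<Rightarrow>\<^sub>0 'k))
        \<union> Poly_Mapping.keys (graft_map (\<lambda>t. Node t b r')
            (dtree_star (Node l a r) l') :: 'b tree \<Rightarrow>\<^sub>0 'k)"
    by (simp only: dtree_star.simps keys_add)
  ultimately show ?case
    by blast
qed simp_all

lemma keys_dtree_star_not_Leaf:
  "x \<noteq> Leaf \<or> y \<noteq> Leaf \<Longrightarrow> t \<in> Poly_Mapping.keys (dtree_star x y :: 'b tree \<Rightarrow>\<^sub>0 'k::comm_ring_1)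
   \<Longrightarrow> t \<noteq> Leaf"
  using keys_dtree_star by blast

lemma set_tree_keys_dtree_star:
  "t \<in> Poly_Mapping.keys (dtree_star x y :: 'b tree \<Rightarrow>\<^sub>0 'k::comm_ring_1)
   \<Longrightarrow> set_tree t \<subseteq> set_tree x \<union> set_tree y"
  using keys_dtree_star by blast

lemma keys_dtree_prec:
  assumes "t \<in> Poly_Mapping.keys (dtree_prec x y :: 'b tree \<Rightarrow>\<^sub>0 'k::comm_ring_1)"
  shows "set_tree t \<subseteq> set_tree x \<union> set_tree y \<and> (\<exists>l a r. t = Node l a r \<and> (y \<noteq> Leaf \<longrightarrow> r \<noteq> Leaf))"
proof (cases x)
  case (Node l a r)
  then have "t \<in> Poly_Mapping.keys (graft_map (Node l a) (dtree_star r y :: 'b tree \<Rightarrow>\<^sub>0 'k))"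
    using assms by (simp add: dtree_prec_Node)
  then obtain s where s: "s \<in> Poly_Mapping.keys (dtree_star r y :: 'b tree \<Rightarrow>\<^sub>0 'k)" "t = Node l a s"
    using keys_graft_map by blast
  then show ?thesis
    using set_tree_keys_dtree_star[OF s(1)] keys_dtree_star_not_Leaf[OF _ s(1)] Node by auto
qed (use assms in simp)

lemma keys_dtree_succ:
  assumes "t \<in> Poly_Mapping.keys (dtree_succ x y :: 'b tree \<Rightarrow>\<^sub>0 'k::comm_ring_1)"
  shows "set_tree t \<subseteq> set_tree x \<union> set_tree y \<and> (\<exists>l a r. t = Node l a r \<and> (x \<noteq> Leaf \<longrightarrow> l \<noteq> Leaf))"
proof (cases y)
  case (Node l a r)
  then have "t \<in> Poly_Mapping.keys (graft_map (\<lambda>t. Node t a r) (dtree_star x l :: 'b tree \<Rightarrow>\<^sub>0 'k))"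
    using assms by (simp add: dtree_succ_Node)
  then obtain s where s: "s \<in> Poly_Mapping.keys (dtree_star x l :: 'b tree \<Rightarrow>\<^sub>0 'k)" "t = Node s a r"
    using keys_graft_map by blast
  then show ?thesis
    using set_tree_keys_dtree_star[OF s(1)] keys_dtree_star_not_Leaf[OF _ s(1)] Node by auto
qed (use assms in simp)

lemma keys_dtree_prec_dend_basis:
  "x \<in> dend_basis B \<Longrightarrow> y \<in> dend_basis B
   \<Longrightarrow> Poly_Mapping.keys (dtree_prec x y :: 'b tree \<Rightarrow>\<^sub>0 'k::comm_ring_1) \<subseteq> dend_basis B"
  using keys_dtree_prec[of _ x y] by (force simp: dend_basis_def)

lemma keys_dtree_succ_dend_basis:
  "x \<in> dend_basis B \<Longrightarrow> y \<in> dend_basis B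
   \<Longrightarrow> Poly_Mapping.keys (dtree_succ x y :: 'b tree \<Rightarrow>\<^sub>0 'k::comm_ring_1) \<subseteq> dend_basis B"
  using keys_dtree_succ[of _ x y] by (force simp: dend_basis_def)

lemma dtree_prec_assoc:
  assumes x: "x = Node l a r" and "y \<noteq> Leaf"
  shows "lin_ext (\<lambda>w. dtree_prec w z) (dtree_prec x y :: 'b tree \<Rightarrow>\<^sub>0 'k::comm_ring_1)
       = lin_ext (dtree_prec x) (dtree_prec y z + dtree_succ y z)"
proof -
  have "lin_ext (\<lambda>w. dtree_prec w z) (dtree_prec x y :: 'b tree \<Rightarrow>\<^sub>0 'k)
      = graft_map (Node l a) (lin_ext (\<lambda>s. dtree_star s z) (dtree_star r y))"
    by (simp only: x dtree_prec_Node lin_ext_prec_graft_right)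
  also have "\<dots> = graft_map (Node l a) (lin_ext (dtree_star r) (dtree_star y z))"
    by (simp only: dtree_star_assoc)
  also have "\<dots> = lin_ext (dtree_prec x) (dtree_prec y z + dtree_succ y z)"
    using assms by (simp add: lin_ext_prec_Node dtree_star_eq_prec_succ)
  finally show ?thesis .
qed

lemma dtree_succ_prec_assoc:
  "lin_ext (\<lambda>w. dtree_prec w z) (dtree_succ x (Node l b r) :: 'b tree \<Rightarrow>\<^sub>0 'k::comm_ring_1)
   = lin_ext (dtree_succ x) (dtree_prec (Node l b r) z)"
  by (simp add: dtree_succ_Node dtree_prec_Node lin_ext_prec_graft_left lin_ext_succ_graft_right)

lemma dtree_succ_assoc:
  assumes "x \<noteq> Leaf" and z: "z = Node l c r"
  shows "lin_ext (\<lambda>w. dtree_succ w z)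
         (dtree_prec x y + dtree_succ x y :: 'b tree \<Rightarrow>\<^sub>0 'k::comm_ring_1)
       = lin_ext (dtree_succ x) (dtree_succ y z)"
proof -
  have "lin_ext (\<lambda>w. dtree_succ w z) (dtree_prec x y + dtree_succ x y :: 'b tree \<Rightarrow>\<^sub>0 'k)
      = graft_map (\<lambda>t. Node t c r) (lin_ext (\<lambda>w. dtree_star w l) (dtree_star x y))"
    using assms by (simp add: dtree_star_eq_prec_succ lin_ext_succ_Node)
  also have "\<dots> = graft_map (\<lambda>t. Node t c r) (lin_ext (dtree_star x) (dtree_star y l))"
    by (simp only: dtree_star_assoc)
  also have "\<dots> = lin_ext (dtree_succ x) (dtree_succ y z)"
    by (simp only: z dtree_succ_Node lin_ext_succ_graft_left)
  finally show ?thesis .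
qed

lemma dendriform_with_basis_dtree:
  "dendriform_with_basis (dtree_prec :: _ \<Rightarrow> _ \<Rightarrow> 'b tree \<Rightarrow>\<^sub>0 'k::comm_ring_1) dtree_succ
      (dend_basis B)"
proof
  fix x y z :: "'b tree"
  assume x: "x \<in> dend_basis B" and y: "y \<in> dend_basis B"
  show "Poly_Mapping.keys (dtree_prec x y :: 'b tree \<Rightarrow>\<^sub>0 'k) \<subseteq> dend_basis B"
    using x y by (rule keys_dtree_prec_dend_basis)
  show "Poly_Mapping.keys (dtree_succ x y :: 'b tree \<Rightarrow>\<^sub>0 'k) \<subseteq> dend_basis B"
    using x y by (rule keys_dtree_succ_dend_basis)
  assume z: "z \<in> dend_basis B"
  obtain l a r where "x = Node l a r" using x by (cases x) (auto simp: dend_basis_def)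
  moreover obtain l' b r' where "y = Node l' b r'" using y by (cases y) (auto simp: dend_basis_def)
  moreover obtain l'' c r'' where "z = Node l'' c r''" using z
      by (cases z) (auto simp: dend_basis_def)
  ultimately show
    "lin_ext (\<lambda>w. dtree_prec w z) (dtree_prec x y :: 'b tree \<Rightarrow>\<^sub>0 'k)
       = lin_ext (dtree_prec x) (dtree_prec y z + dtree_succ y z)"
    "lin_ext (\<lambda>w. dtree_prec w z) (dtree_succ x y :: 'b tree \<Rightarrow>\<^sub>0 'k)
       = lin_ext (dtree_succ x) (dtree_prec y z)"
    "lin_ext (\<lambda>w. dtree_succ w z) (dtree_prec x y + dtree_succ x y :: 'b tree \<Rightarrow>\<^sub>0 'k)
       = lin_ext (dtree_succ x) (dtree_succ y z)"
    by (simp_all only: dtree_prec_assoc dtree_succ_prec_assoc dtree_succ_assoc tree.distinct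
        simp_thms)
qed

subsection \<open>A contracting homotopy for the free dendriform algebra\<close>

text \<open>\<open>split_at k\<close> replaces the entry at the 0-based position \<open>k\<close> by two entries, whereas
  \<open>join_at i\<close> merges the entries at the 1-based positions \<open>i, i + 1\<close>.\<close>

definition split_at :: "nat \<Rightarrow> 'a list \<Rightarrow> 'a \<Rightarrow> 'a \<Rightarrow> 'a list" where
  "split_at k xs a b = take k xs @ a # b # drop (k + 1) xs"

lemma length_split_at: "k < length xs \<Longrightarrow> length (split_at k xs a b) = length xs + 1"
  by (simp add: split_at_def)

lemma nth_split_at:
  "k < length xs \<Longrightarrow> j < length xs + 1 \<Longrightarrow> split_at k xs a b ! j =
   (if j < k then xs ! j else if j = k then a else if j = k + 1 then b else xs ! (j - 1))"
proof -
  assume "k < length xs" "j < length xs + 1"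
  then show ?thesis
    by (cases "j < k"; cases "j = k"; cases "j = k + 1")
       (auto simp: split_at_def nth_append min_def nth_Cons' not_less split: nat.split
         intro!: arg_cong[where f="nth xs"])
qed

lemma set_split_at: "set (split_at k xs a b) \<subseteq> insert a (insert b (set xs))"
  by (auto simp: split_at_def dest: in_set_takeD in_set_dropD)

lemma join_at_split_at_same:
  "k < length xs \<Longrightarrow> join_at (k + 1) (split_at k xs a b) c = xs[k := c]"
  by (rule nth_equalityI) (auto simp: length_join_at length_split_at nth_join_at nth_split_at
      nth_list_update)

lemma join_at_split_at_below:
  "1 \<le> i \<Longrightarrow> i < k \<Longrightarrow> k < length xs \<Longrightarrow> join_at i (split_at k xs a b) t
      = split_at (k - 1) (join_at i xs t) a b"
  by (rule nth_equalityI) (auto simp: length_join_at length_split_at nth_join_at nth_split_at)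

lemma join_at_split_at_left:
  "1 \<le> k \<Longrightarrow> k < length xs \<Longrightarrow> join_at k (split_at k xs a b) g = split_at (k - 1) (join_at k xs c) g b"
  by (rule nth_equalityI) (auto simp: length_join_at length_split_at nth_join_at nth_split_at)

lemma join_at_split_at_right:
  "k + 1 < length xs \<Longrightarrow> join_at (k + 2) (split_at k xs a b) t
      = split_at k (join_at (k + 1) xs c) a t"
  by (rule nth_equalityI) (auto simp: length_join_at length_split_at nth_join_at nth_split_at)

lemma join_at_split_at_above:
  "k + 1 < i \<Longrightarrow> i < length xs \<Longrightarrow> join_at (i + 1) (split_at k xs a b) t
      = split_at k (join_at i xs t) a b"
  by (rule nth_equalityI) (auto simp: length_join_at length_split_at nth_join_at nth_split_at)

lemma split_at_join_at:
  "1 \<le> k \<Longrightarrow> k < length xs \<Longrightarrow> split_at (k - 1) (join_at k xs c) (xs ! (k - 1)) (xs ! k) = xs"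
  by (rule nth_equalityI) (auto simp: length_join_at length_split_at nth_join_at nth_split_at)

text \<open>The homotopy undoes a product in the \<open>r\<close>-th tree \<open>t = Node \<alpha> v \<beta>\<close>: if \<open>\<alpha>\<close> is not
  the leaf then \<open>t = \<alpha> \<succ> Node Leaf v \<beta>\<close>, and if \<open>r = 1\<close> and \<open>\<alpha> = Leaf\<close> then
  \<open>t = Node Leaf v Leaf \<prec> \<beta>\<close>; the factors are inserted as two consecutive entries.\<close>

definition dend_htpy :: "nat \<times> 'b tree list \<Rightarrow> (nat \<times> 'b tree list \<Rightarrow>\<^sub>0 'k::comm_ring_1)" where
  "dend_htpy x = (case x of (r, xs) \<Rightarrow> (case xs ! (r - 1) of Leaf \<Rightarrow> 0 | Node \<alpha> v \<beta> \<Rightarrow>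
     if \<alpha> \<noteq> Leaf then Poly_Mapping.single (r + 1, split_at (r - 1) xs \<alpha> (Node Leaf v \<beta>))
         ((-1) ^ (r + 1))
     else if r = 1 \<and> \<beta> \<noteq> Leaf then Poly_Mapping.single
         (1, split_at 0 xs (Node Leaf v Leaf) \<beta>) 1 else 0))"

lemma dend_htpy_succ_split: "zs ! (r - 1) = Node \<alpha> v \<beta> \<Longrightarrow> \<alpha> \<noteq> Leaf \<Longrightarrow>
  dend_htpy (r, zs) = Poly_Mapping.single (r + 1, split_at (r - 1) zs \<alpha> (Node Leaf v \<beta>))
      ((-1) ^ (r + 1))"
  by (simp add: dend_htpy_def)

lemma dend_htpy_prec_split: "zs ! 0 = Node Leaf v \<beta> \<Longrightarrow> \<beta> \<noteq> Leaf \<Longrightarrow>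
  dend_htpy (1, zs) = Poly_Mapping.single (1, split_at 0 zs (Node Leaf v Leaf) \<beta>) 1"
  by (simp add: dend_htpy_def)

lemma dend_htpy_no_split: "zs ! (r - 1) = Node Leaf v \<beta> \<Longrightarrow> r \<noteq> 1 \<or> \<beta> = Leaf \<Longrightarrow> dend_htpy (r, zs) = 0"
  by (auto simp: dend_htpy_def)

lemma lin_ext_dend_d_basis:
  "lin_ext g (dend_d_basis p s (r, xs))
   = (\<Sum>i\<in>{1..<length xs}. smult ((-1) ^ (i + 1)) (lin_ext g (dend_face p s i (r, xs))))"
  by (simp add: dend_d_basis_alt lin_ext_sum lin_ext_smult)

lemma dend_d_single_alt:
  "dend_d p s (Poly_Mapping.single (r, xs) c)
   = smult c (\<Sum>j\<in>{1..<length xs}. smult ((-1) ^ (j + 1)) (dend_face p s j (r, xs)))"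
  by (simp add: dend_d_single dend_d_basis_alt)

lemma sum_eq_single: "finite I \<Longrightarrow> i \<in> I \<Longrightarrow> (\<And>j. j \<in> I \<Longrightarrow> j \<noteq> i \<Longrightarrow> f j = 0) \<Longrightarrow> sum f I = f i"
  by (simp add: sum.remove)

text \<open>The sign bookkeeping of \<open>d h + h d\<close> on a basis element \<open>x\<close> with \<open>h x = (-1)^(r+1) y\<close>:
  \<open>F j\<close> are the faces of \<open>y\<close> and \<open>H i\<close> the images under \<open>h\<close> of the faces of \<open>x\<close>.  All terms
  cancel in pairs except the face \<open>F r = X\<close>.\<close>

lemma homotopy_signed_sums:
  fixes F H :: "nat \<Rightarrow> ('a \<Rightarrow>\<^sub>0 'k::comm_ring_1)"
  assumes r: "1 \<le> r" "r \<le> n" and X: "F r = X"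
    and below: "\<And>i. 1 \<le> i \<Longrightarrow> i < r \<Longrightarrow> H i = smult ((-1) ^ r) (F i)"
    and above: "\<And>i. r \<le> i \<Longrightarrow> i < n \<Longrightarrow> H i = smult ((-1) ^ (r + 1)) (F (i + 1))"
  shows "smult ((-1) ^ (r + 1)) (\<Sum>j\<in>{1..<n + 1}. smult ((-1) ^ (j + 1)) (F j))
       + (\<Sum>i\<in>{1..<n}. smult ((-1) ^ (i + 1)) (H i)) = X"
proof -
  let ?s = "(-1::'k) ^ (r + 1)"
  let ?f = "\<lambda>j. smult (?s * (-1) ^ (j + 1)) (F j)" and ?h = "\<lambda>i. smult ((-1) ^ (i + 1)) (H i)"
  have low: "sum ?f {1..<r} + sum ?h {1..<r} = 0"
    by (simp add: sum.distrib[symmetric] below smult_add_left[symmetric] algebra_simps)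
  have high: "sum ?f {r + 1..<n + 1} + sum ?h {r..<n} = 0"
  proof -
    have "sum ?h {r..<n} = sum (\<lambda>j. ?h (j - 1)) {r + 1..<n + 1}"
      using sum.shift_bounds_nat_ivl[of "\<lambda>j. ?h (j - 1)" r 1 n] by simp
    also have "\<dots> = sum (\<lambda>j. - ?f j) {r + 1..<n + 1}"
      by (rule sum.cong) (auto simp: above smult_uminus_left[symmetric] algebra_simps)
    finally show ?thesis by (simp add: sum_negf)
  qed
  have split_top: "sum g {1..<n + 1} = sum g {1..<r} + g r + sum g {r + 1..<n + 1}"
    for g :: "nat \<Rightarrow> 'a \<Rightarrow>\<^sub>0 'k"
  proof -
    have "sum g {1..<n + 1} = sum g {1..<r} + sum g {r..<n + 1}"
      using sum.atLeastLessThan_concat[of 1 r "n + 1" g] r by simp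
    also have "sum g {r..<n + 1} = g r + sum g {r + 1..<n + 1}"
      using sum.atLeast_Suc_lessThan[of r "n + 1" g] r by simp
    finally show ?thesis by (simp add: add.assoc)
  qed
  have split_bottom: "sum g {1..<n} = sum g {1..<r} + sum g {r..<n}" for g :: "nat \<Rightarrow> 'a \<Rightarrow>\<^sub>0 'k"
    using r sum.atLeastLessThan_concat[of 1 r n g] by simp
  have "sum ?f {1..<n + 1} + sum ?h {1..<n}
      = (sum ?f {1..<r} + sum ?h {1..<r}) + ?f r + (sum ?f {r + 1..<n + 1} + sum ?h {r..<n})"
    unfolding split_top[of ?f] split_bottom[of ?h] by (simp only: ac_simps)
  also have "\<dots> = X"
    using low high by (simp add: X flip: power_add)
  finally show ?thesis
    by (simp only: smult_sum smult_smult)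
qed

definition single_vertex :: "'b tree list \<Rightarrow> bool" where
  "single_vertex xs \<longleftrightarrow> (\<exists>v. xs = [Node Leaf v Leaf])"

abbreviation "tree_face \<equiv> dend_face dtree_prec dtree_succ"
abbreviation "tree_circ \<equiv> dend_circ dtree_prec dtree_succ"
abbreviation "tree_d \<equiv> dend_d dtree_prec dtree_succ"

context
  fixes xs :: "'b tree list" and r n :: nat and \<alpha> \<beta> :: "'b tree" and v :: 'b
  assumes len: "length xs = n" and r1: "1 \<le> r" and rn: "r \<le> n" and not_Leaf: "Leaf \<notin> set xs"
    and xs_r: "xs ! (r - 1) = Node \<alpha> v \<beta>" and left_not_Leaf: "\<alpha> \<noteq> Leaf"
begin

lemma nth_split_succ:
  "j < n + 1 \<Longrightarrow> split_at (r - 1) xs \<alpha> (Node Leaf v \<beta>) ! j =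
   (if j < r - 1 then xs ! j else if j = r - 1 then \<alpha>
    else if j = r then Node Leaf v \<beta> else xs ! (j - 1))"
  using nth_split_at[of "r - 1" xs j \<alpha> "Node Leaf v \<beta>"] len r1 rn by auto

lemma face_split_succ: "tree_face r (r + 1, split_at (r - 1) xs \<alpha> (Node Leaf v \<beta>))
    = (Poly_Mapping.single (r, xs) 1 :: _ \<Rightarrow>\<^sub>0 'k::comm_ring_1)"
proof -
  have c: "tree_circ r (r + 1) \<alpha> (Node Leaf v \<beta>) = (Poly_Mapping.single (Node \<alpha> v \<beta>) 1 :: _ \<Rightarrow>\<^sub>0 'k)"
    by (simp add: dend_circ_succ dtree_succ_left_Leaf)
  have l: "join_at r (split_at (r - 1) xs \<alpha> (Node Leaf v \<beta>)) (Node \<alpha> v \<beta>) = xs"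
  proof -
    have "xs[r - 1 := Node \<alpha> v \<beta>] = xs" using xs_r list_update_id by metis
    then show ?thesis using join_at_split_at_same[of "r - 1" xs \<alpha> "Node Leaf v \<beta>"
        "Node \<alpha> v \<beta>"] len r1 rn by simp
  qed
  have n: "split_at (r - 1) xs \<alpha> (Node Leaf v \<beta>) ! (r - 1) = \<alpha>"
      "split_at (r - 1) xs \<alpha> (Node Leaf v \<beta>) ! r = Node Leaf v \<beta>"
    using nth_split_succ r1 rn by auto
  show ?thesis
    by (simp add: dend_face_join_at n n[simplified] c c[simplified] l l[simplified] dend_di_r_def)
qed

lemma htpy_face_split_succ_below: assumes i: "1 \<le> i" "i + 1 < r"
  shows "lin_ext dend_htpy (tree_face i (r, xs)) = smult ((-1) ^ r)
      (tree_face i (r + 1, split_at (r - 1) xs \<alpha> (Node Leaf v \<beta>)) :: _ \<Rightarrow>\<^sub>0 'k::comm_ring_1)"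
proof -
  have di: "dend_di_r i r = r - 1" "dend_di_r i (r + 1) = r" using i by (auto simp: dend_di_r_def)
  have htpy_eq: "dend_htpy (r - 1, join_at i xs t) =
      (Poly_Mapping.single (r, split_at (r - 2) (join_at i xs t) \<alpha> (Node Leaf v \<beta>))
        ((-1) ^ r) :: _ \<Rightarrow>\<^sub>0 'k)" for t
  proof -
    have "join_at i xs t ! (r - 1 - 1) = xs ! (r - 1)"
    proof -
      have "Suc (r - 2) = r - 1" "r - 1 - 1 = r - 2" "r - 2 < length xs - 1" "\<not> r - 2 < i - 1"
          "r - 2 \<noteq> i - 1"
        using i len rn by auto
      then show ?thesis using nth_join_at[of i xs "r - 2" t] i len rn by auto
    qed
    then have "dend_htpy (r - 1, join_at i xs t) = (Poly_Mapping.single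
        (r - 1 + 1, split_at (r - 1 - 1) (join_at i xs t) \<alpha> (Node Leaf v \<beta>))
          ((-1) ^ (r - 1 + 1)) :: _ \<Rightarrow>\<^sub>0 'k)"
      using dend_htpy_succ_split[of "join_at i xs t" "r - 1" \<alpha> v \<beta>] xs_r left_not_Leaf by simp
    moreover have "r - 1 + 1 = r" "r - 1 - 1 = r - 2" using i by auto
    ultimately show ?thesis by simp
  qed
  have n: "split_at (r - 1) xs \<alpha> (Node Leaf v \<beta>) ! (i - 1) = xs ! (i - 1)"
      "split_at (r - 1) xs \<alpha> (Node Leaf v \<beta>) ! i = xs ! i"
    using nth_split_succ i rn by auto
  have c: "tree_circ i (r + 1) a b = tree_circ i r a b" for a b :: "'b tree"
    using i by (simp add: dend_circ_star)
  have l: "join_at i (split_at (r - 1) xs \<alpha> (Node Leaf v \<beta>)) t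
      = split_at (r - 2) (join_at i xs t) \<alpha> (Node Leaf v \<beta>)" for t
    using join_at_split_at_below[of i "r - 1" xs] i len rn by (simp add: numeral_2_eq_2)
  show ?thesis
    by (subst lin_ext_dend_face) (simp add: di di[simplified] htpy_eq htpy_eq[simplified]
        dend_face_join_at n n[simplified] c c[simplified] l l[simplified] smult_lin_ext_single)
qed

lemma htpy_face_split_succ_prev: assumes r_ge_2: "2 \<le> r"
  shows "lin_ext dend_htpy (tree_face (r - 1) (r, xs))
      = smult ((-1) ^ r) (tree_face (r - 1) (r + 1, split_at (r - 1) xs \<alpha> (Node Leaf v \<beta>)) :: _ \<Rightarrow>\<^sub>0
        'k::comm_ring_1)"
proof -
  obtain m where m: "r = Suc (Suc m)" using r_ge_2 by (cases r; cases "r - 1") auto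
  let ?a = "xs ! m"
  have "m < length xs" using len rn m by simp
  then have a_not_Leaf: "?a \<noteq> Leaf" using not_Leaf nth_mem by force
  have xs_r': "xs ! Suc m = Node \<alpha> v \<beta>" using xs_r m by simp
  have "lin_ext dend_htpy (tree_face (r - 1) (r, xs))
      = lin_ext (\<lambda>t. dend_htpy (Suc m, join_at (Suc m) xs t)) (dtree_succ ?a (Node \<alpha> v \<beta>))"
    by (simp add: lin_ext_dend_face m dend_di_r_def dend_circ_succ xs_r')
  also have "\<dots> = lin_ext (\<lambda>g. dend_htpy (Suc m, join_at (Suc m) xs (Node g v \<beta>))) (dtree_star ?a \<alpha>)"
    by (simp add: dtree_succ_Node lin_ext_graft_map)
  also have "\<dots> = lin_ext (\<lambda>g. Poly_Mapping.single (r, split_at m (join_at (Suc m) xs \<alpha>) g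
      (Node Leaf v \<beta>)) ((-1) ^ r)) (dtree_star ?a \<alpha>)"
  proof -
    have htpy_eq: "dend_htpy (Suc m, join_at (Suc m) xs (Node g v \<beta>)) =
       (Poly_Mapping.single (r, split_at m (join_at (Suc m) xs \<alpha>) g (Node Leaf v \<beta>)) ((-1) ^ r))"
      if g: "g \<in> Poly_Mapping.keys (dtree_star ?a \<alpha>)" for g
    proof -
      have g_not_Leaf: "g \<noteq> Leaf" using g keys_dtree_star_not_Leaf a_not_Leaf by blast
      have "join_at (Suc m) xs (Node g v \<beta>) ! m = Node g v \<beta>"
          using nth_join_at[of "Suc m" xs m] len rn m by simp
      then have "dend_htpy (Suc m, join_at (Suc m) xs (Node g v \<beta>)) =
         (Poly_Mapping.single (Suc (Suc m), split_at m (join_at (Suc m) xs (Node g v \<beta>)) g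
             (Node Leaf v \<beta>)) ((-1) ^ Suc (Suc m)))"
        using dend_htpy_succ_split[of "join_at (Suc m) xs (Node g v \<beta>)"
            "Suc m" g v \<beta>] g_not_Leaf by simp
      also have "split_at m (join_at (Suc m) xs (Node g v \<beta>)) g (Node Leaf v \<beta>)
          = split_at m (join_at (Suc m) xs \<alpha>) g (Node Leaf v \<beta>)"
        using len rn m by (simp add: join_at_def split_at_def min_def)
      finally show ?thesis using m by simp
    qed
    show ?thesis by (rule lin_ext_cong) (rule htpy_eq)
  qed
  also have "\<dots> = smult ((-1) ^ r) (tree_face (r - 1)
      (r + 1, split_at (r - 1) xs \<alpha> (Node Leaf v \<beta>)))"
  proof -
    have n: "split_at (Suc m) xs \<alpha> (Node Leaf v \<beta>) ! m = ?a"
        "split_at (Suc m) xs \<alpha> (Node Leaf v \<beta>) ! Suc m = \<alpha>"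
      using nth_split_succ[of m] nth_split_succ[of "Suc m"] m rn by auto
    have l: "join_at (Suc m) (split_at (Suc m) xs \<alpha> (Node Leaf v \<beta>)) g
        = split_at m (join_at (Suc m) xs \<alpha>) g (Node Leaf v \<beta>)" for g
      using join_at_split_at_left[of "Suc m" xs \<alpha> "Node Leaf v \<beta>" g \<alpha>] len rn m by simp
    show ?thesis
      using a_not_Leaf by (simp add: dend_face_join_at m n l dend_di_r_def dend_circ_star
          dtree_star_eq_prec_succ[symmetric] smult_lin_ext_single)
  qed
  finally show ?thesis .
qed

lemma htpy_face_split_succ_self: assumes r_less_n: "r < n"
  shows "lin_ext dend_htpy (tree_face r (r, xs)) = smult ((-1) ^ (r + 1))
      (tree_face (r + 1) (r + 1, split_at (r - 1) xs \<alpha> (Node Leaf v \<beta>)) :: _ \<Rightarrow>\<^sub>0 'k::comm_ring_1)"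
proof -
  obtain k where k: "r = Suc k" using r1 by (cases r) auto
  let ?b = "xs ! Suc k"
  have xs_r': "xs ! k = Node \<alpha> v \<beta>" using xs_r k by simp
  have "lin_ext dend_htpy (tree_face r (r, xs)) = lin_ext
      (\<lambda>t. dend_htpy (Suc k, join_at (Suc k) xs t)) (dtree_prec (Node \<alpha> v \<beta>) ?b)"
    by (simp add: lin_ext_dend_face k dend_di_r_def dend_circ_prec xs_r')
  also have "\<dots> = lin_ext (\<lambda>g. dend_htpy (Suc k, join_at (Suc k) xs (Node \<alpha> v g))) (dtree_star \<beta> ?b)"
    by (simp add: dtree_prec_Node lin_ext_graft_map)
  also have "\<dots> = lin_ext (\<lambda>g. Poly_Mapping.single (Suc (Suc k), split_at k
      (join_at (Suc k) xs (Node \<alpha> v g)) \<alpha> (Node Leaf v g)) ((-1) ^ (r + 1))) (dtree_star \<beta> ?b)"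
  proof -
    have htpy_eq: "dend_htpy (Suc k, join_at (Suc k) xs (Node \<alpha> v g)) =
       (Poly_Mapping.single (Suc (Suc k), split_at k (join_at (Suc k) xs (Node \<alpha> v g)) \<alpha>
           (Node Leaf v g)) ((-1) ^ (r + 1)))" for g
    proof -
      have "join_at (Suc k) xs (Node \<alpha> v g) ! k = Node \<alpha> v g"
          using nth_join_at[of "Suc k" xs k] len r_less_n k by simp
      then show ?thesis using dend_htpy_succ_split[of "join_at (Suc k) xs (Node \<alpha> v g)"
          "Suc k" \<alpha> v g] left_not_Leaf k by simp
    qed
    show ?thesis by (rule lin_ext_cong) (rule htpy_eq)
  qed
  also have "\<dots> = smult ((-1) ^ (r + 1)) (tree_face (r + 1)
      (r + 1, split_at (r - 1) xs \<alpha> (Node Leaf v \<beta>)))"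
  proof -
    have n: "split_at k xs \<alpha> (Node Leaf v \<beta>) ! Suc k = Node Leaf v \<beta>"
        "split_at k xs \<alpha> (Node Leaf v \<beta>) ! Suc (Suc k) = ?b"
      using nth_split_succ[of "Suc k"] nth_split_succ[of "Suc (Suc k)"] k r_less_n by auto
    have l: "join_at (Suc (Suc k)) (split_at k xs \<alpha> (Node Leaf v \<beta>)) (Node Leaf v g)
        = split_at k (join_at (Suc k) xs (Node \<alpha> v g)) \<alpha> (Node Leaf v g)" for g
      using join_at_split_at_right[of k xs \<alpha> "Node Leaf v \<beta>" "Node Leaf v g"
          "Node \<alpha> v g"] len r_less_n k by simp
    show ?thesis
      by (simp add: dend_face_join_at k n l dend_di_r_def dend_circ_prec dtree_prec_Node
          lin_ext_graft_map smult_lin_ext_single)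
  qed
  finally show ?thesis .
qed

lemma htpy_face_split_succ_above: assumes i: "r < i" "i < n"
  shows "lin_ext dend_htpy (tree_face i (r, xs)) = smult ((-1) ^ (r + 1))
      (tree_face (i + 1) (r + 1, split_at (r - 1) xs \<alpha> (Node Leaf v \<beta>)) :: _ \<Rightarrow>\<^sub>0 'k::comm_ring_1)"
proof -
  obtain k where k: "r = Suc k" using r1 by (cases r) auto
  obtain j where j: "i = Suc j" using i by (cases i) auto
  have xs_r': "xs ! k = Node \<alpha> v \<beta>" using xs_r k by simp
  have "lin_ext dend_htpy (tree_face i (r, xs)) = lin_ext
      (\<lambda>t. dend_htpy (Suc k, join_at (Suc j) xs t))
        (tree_circ (Suc j) (Suc k) (xs ! j) (xs ! Suc j))"
    using i by (simp add: lin_ext_dend_face k j dend_di_r_def)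
  also have "\<dots> = lin_ext (\<lambda>t. Poly_Mapping.single (Suc (Suc k), split_at k (join_at (Suc j) xs t) \<alpha>
      (Node Leaf v \<beta>)) ((-1) ^ (r + 1))) (tree_circ (Suc j) (Suc k) (xs ! j) (xs ! Suc j))"
  proof -
    have htpy_eq: "dend_htpy (Suc k, join_at (Suc j) xs t) =
       (Poly_Mapping.single (Suc (Suc k), split_at k (join_at (Suc j) xs t) \<alpha> (Node Leaf v \<beta>))
           ((-1) ^ (r + 1)))" for t
    proof -
      have "join_at (Suc j) xs t ! k = Node \<alpha> v \<beta>" using nth_join_at[of
          "Suc j" xs k] len i k j xs_r' by simp
      then show ?thesis using dend_htpy_succ_split[of "join_at (Suc j) xs t"
          "Suc k" \<alpha> v \<beta>] left_not_Leaf k by simp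
    qed
    show ?thesis by (rule lin_ext_cong) (rule htpy_eq)
  qed
  also have "\<dots> = smult ((-1) ^ (r + 1)) (tree_face (i + 1)
      (r + 1, split_at (r - 1) xs \<alpha> (Node Leaf v \<beta>)))"
  proof -
    have n: "split_at k xs \<alpha> (Node Leaf v \<beta>) ! Suc j = xs ! j"
        "split_at k xs \<alpha> (Node Leaf v \<beta>) ! Suc (Suc j) = xs ! Suc j"
      using nth_split_succ[of "Suc j"] nth_split_succ[of "Suc (Suc j)"] k j i by auto
    have l: "join_at (Suc (Suc j)) (split_at k xs \<alpha> (Node Leaf v \<beta>)) t
        = split_at k (join_at (Suc j) xs t) \<alpha> (Node Leaf v \<beta>)" for t
      using join_at_split_at_above[of k "Suc j" xs \<alpha> "Node Leaf v \<beta>" t] len i k j by simp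
    have c: "tree_circ (Suc (Suc j)) (Suc (Suc k)) a b
        = tree_circ (Suc j) (Suc k) a b" for a b :: "'b tree"
      using i k j by (simp add: dend_circ_star)
    show ?thesis
      using i by (simp add: dend_face_join_at k j n l c dend_di_r_def smult_lin_ext_single)
  qed
  finally show ?thesis .
qed


lemma htpy_identity_split_succ:
  "tree_d (dend_htpy (r, xs)) + lin_ext dend_htpy (dend_d_basis dtree_prec dtree_succ (r, xs))
   = (Poly_Mapping.single (r, xs) 1 :: _ \<Rightarrow>\<^sub>0 'k::comm_ring_1)"
proof -
  let ?ys = "split_at (r - 1) xs \<alpha> (Node Leaf v \<beta>)"
  have "length ?ys = n + 1"
    using length_split_at[of "r - 1" xs] len r1 rn by simp
  then have d_htpy: "tree_d (dend_htpy (r, xs)) = smult ((-1) ^ (r + 1))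
      (\<Sum>j\<in>{1..<n + 1}. smult ((-1) ^ (j + 1)) (tree_face j (r + 1, ?ys)) :: _ \<Rightarrow>\<^sub>0 'k)"
    by (simp only: dend_htpy_succ_split[OF xs_r left_not_Leaf] dend_d_single_alt)
  show ?thesis
    unfolding d_htpy lin_ext_dend_d_basis len
  proof (rule homotopy_signed_sums[where F = "\<lambda>j. tree_face j (r + 1, ?ys)"
        and H = "\<lambda>i. lin_ext dend_htpy (tree_face i (r, xs))", OF r1 rn face_split_succ])
    fix i assume i: "1 \<le> i" "i < r"
    show "lin_ext dend_htpy (tree_face i (r, xs)) = smult ((-1) ^ r)
        (tree_face i (r + 1, ?ys) :: _ \<Rightarrow>\<^sub>0 'k)"
    proof (cases "i + 1 < r")
      case True
      then show ?thesis using htpy_face_split_succ_below[OF i(1) True] by simp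
    next
      case False
      then have "i = r - 1" "2 \<le> r" using i by auto
      then show ?thesis using htpy_face_split_succ_prev by simp
    qed
  next
    fix i assume i: "r \<le> i" "i < n"
    show "lin_ext dend_htpy (tree_face i (r, xs))
        = smult ((-1) ^ (r + 1)) (tree_face (i + 1) (r + 1, ?ys) :: _ \<Rightarrow>\<^sub>0 'k)"
    proof (cases "i = r")
      case True
      then show ?thesis using htpy_face_split_succ_self i by simp
    next
      case False
      with i show ?thesis by (intro htpy_face_split_succ_above) auto
    qed
  qed
qed

end

context
  fixes xs :: "'b tree list" and n :: nat and \<beta> :: "'b tree" and v :: 'b
  assumes len: "length xs = n" and n1: "1 \<le> n" and not_Leaf: "Leaf \<notin> set xs"
    and xs_r: "xs ! 0 = Node Leaf v \<beta>" and right_not_Leaf: "\<beta> \<noteq> Leaf"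
begin

lemma nth_split_prec: "j < n + 1 \<Longrightarrow> split_at 0 xs (Node Leaf v Leaf) \<beta> ! j =
  (if j = 0 then Node Leaf v Leaf else if j = 1 then \<beta> else xs ! (j - 1))"
  using nth_split_at[of 0 xs j "Node Leaf v Leaf" \<beta>] len n1 by auto

lemma face_split_prec: "tree_face 1 (1, split_at 0 xs (Node Leaf v Leaf) \<beta>)
    = (Poly_Mapping.single (1, xs) 1 :: _ \<Rightarrow>\<^sub>0 'k::comm_ring_1)"
proof -
  have l: "join_at 1 (split_at 0 xs (Node Leaf v Leaf) \<beta>) (Node Leaf v \<beta>) = xs"
  proof -
    have "xs[0 := Node Leaf v \<beta>] = xs" using xs_r list_update_id by metis
    then show ?thesis using join_at_split_at_same[of 0 xs "Node Leaf v Leaf" \<beta>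
        "Node Leaf v \<beta>"] len n1 by simp
  qed
  have n: "split_at 0 xs (Node Leaf v Leaf) \<beta> ! 0 = Node Leaf v Leaf"
      "split_at 0 xs (Node Leaf v Leaf) \<beta> ! 1 = \<beta>"
    using nth_split_prec n1 by auto
  show ?thesis
    by (simp add: dend_face_join_at n n[simplified] dend_circ_prec dtree_prec_right_Leaf l
        l[simplified] dend_di_r_def)
qed

lemma htpy_face_split_prec_first: assumes n_gt_1: "1 < n"
  shows "lin_ext dend_htpy (tree_face 1 (1, xs)) = smult ((-1) ^ (1 + 1))
      (tree_face (1 + 1) (1, split_at 0 xs (Node Leaf v Leaf) \<beta>) :: _ \<Rightarrow>\<^sub>0 'k::comm_ring_1)"
proof -
  let ?b = "xs ! 1"
  have "lin_ext dend_htpy (tree_face 1 (1, xs)) = lin_ext (\<lambda>t. dend_htpy (1, join_at 1 xs t))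
      (dtree_prec (Node Leaf v \<beta>) ?b)"
    by (simp add: lin_ext_dend_face dend_di_r_def dend_circ_prec xs_r)
  also have "\<dots> = lin_ext (\<lambda>g. dend_htpy (1, join_at 1 xs (Node Leaf v g))) (dtree_star \<beta> ?b)"
    by (simp add: dtree_prec_Node lin_ext_graft_map)
  also have "\<dots> = lin_ext (\<lambda>g. Poly_Mapping.single (1, split_at 0 (join_at 1 xs (Node Leaf v g))
      (Node Leaf v Leaf) g) 1) (dtree_star \<beta> ?b)"
  proof -
    have htpy_eq: "dend_htpy (1, join_at 1 xs (Node Leaf v g)) =
       Poly_Mapping.single (1, split_at 0 (join_at 1 xs (Node Leaf v g)) (Node Leaf v Leaf) g) 1"
      if g: "g \<in> Poly_Mapping.keys (dtree_star \<beta> ?b)" for g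
    proof -
      have g_not_Leaf: "g \<noteq> Leaf" using g keys_dtree_star_not_Leaf right_not_Leaf by blast
      have "join_at 1 xs (Node Leaf v g) ! 0 = Node Leaf v g"
          using nth_join_at[of 1 xs 0] len n_gt_1 by simp
      then show ?thesis using dend_htpy_prec_split[of "join_at 1 xs (Node Leaf v g)" v g] g_not_Leaf
          by simp
    qed
    show ?thesis by (rule lin_ext_cong) (rule htpy_eq)
  qed
  also have "\<dots> = smult ((-1) ^ (1 + 1)) (tree_face (1 + 1) (1, split_at 0 xs (Node Leaf v Leaf) \<beta>))"
  proof -
    have n: "split_at 0 xs (Node Leaf v Leaf) \<beta> ! 1 = \<beta>"
        "split_at 0 xs (Node Leaf v Leaf) \<beta> ! Suc (Suc 0) = ?b"
      using nth_split_prec[of 1] nth_split_prec[of "Suc (Suc 0)"] n_gt_1 by auto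
    have l: "join_at (Suc (Suc 0)) (split_at 0 xs (Node Leaf v Leaf) \<beta>) g
        = split_at 0 (join_at 1 xs (Node Leaf v g)) (Node Leaf v Leaf) g" for g
      using join_at_split_at_right[of 0 xs "Node Leaf v Leaf" \<beta> g "Node Leaf v g"] len n_gt_1
          by simp
    have m: "tree_circ (Suc (Suc 0)) (Suc 0) \<beta> ?b = dtree_star \<beta> ?b"
      using right_not_Leaf by (simp add: dend_circ_star dtree_star_eq_prec_succ)
    show ?thesis
      by (simp add: dend_face_join_at n n[simplified] l m m[simplified] dend_di_r_def)
  qed
  finally show ?thesis .
qed

lemma htpy_face_split_prec_above: assumes i: "1 < i" "i < n"
  shows "lin_ext dend_htpy (tree_face i (1, xs)) = smult ((-1) ^ (1 + 1))
      (tree_face (i + 1) (1, split_at 0 xs (Node Leaf v Leaf) \<beta>) :: _ \<Rightarrow>\<^sub>0 'k::comm_ring_1)"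
proof -
  obtain j where j: "i = Suc j" using i by (cases i) auto
  have "lin_ext dend_htpy (tree_face i (1, xs)) = lin_ext (\<lambda>t. dend_htpy (1, join_at (Suc j) xs t))
      (tree_circ (Suc j) 1 (xs ! j) (xs ! Suc j))"
    using i by (simp add: lin_ext_dend_face j dend_di_r_def)
  also have "\<dots> = lin_ext (\<lambda>t. Poly_Mapping.single (1, split_at 0 (join_at (Suc j) xs t)
      (Node Leaf v Leaf) \<beta>) 1) (tree_circ (Suc j) 1 (xs ! j) (xs ! Suc j))"
  proof -
    have htpy_eq: "dend_htpy (1, join_at (Suc j) xs t)
        = Poly_Mapping.single (1, split_at 0 (join_at (Suc j) xs t) (Node Leaf v Leaf) \<beta>) 1" for t
    proof -
      have "join_at (Suc j) xs t ! 0 = Node Leaf v \<beta>"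
          using nth_join_at[of "Suc j" xs 0] len i j xs_r by simp
      then show ?thesis using dend_htpy_prec_split[of "join_at (Suc j) xs t" v \<beta>] right_not_Leaf
          by simp
    qed
    show ?thesis by (rule lin_ext_cong) (rule htpy_eq)
  qed
  also have "\<dots> = smult ((-1) ^ (1 + 1)) (tree_face (i + 1) (1, split_at 0 xs (Node Leaf v Leaf) \<beta>))"
  proof -
    have n: "split_at 0 xs (Node Leaf v Leaf) \<beta> ! Suc j = xs ! j"
        "split_at 0 xs (Node Leaf v Leaf) \<beta> ! Suc (Suc j) = xs ! Suc j"
      using nth_split_prec[of "Suc j"] nth_split_prec[of "Suc (Suc j)"] j i by auto
    have l: "join_at (Suc (Suc j)) (split_at 0 xs (Node Leaf v Leaf) \<beta>) t
        = split_at 0 (join_at (Suc j) xs t) (Node Leaf v Leaf) \<beta>" for t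
      using join_at_split_at_above[of 0 "Suc j" xs "Node Leaf v Leaf" \<beta> t] len i j by simp
    have c: "tree_circ (Suc (Suc j)) 1 a b = tree_circ (Suc j) 1 a b" for a b :: "'b tree"
      using i j by (simp add: dend_circ_star)
    show ?thesis
      using i by (simp add: dend_face_join_at j n l c c[simplified] dend_di_r_def)
  qed
  finally show ?thesis .
qed


lemma htpy_identity_split_prec:
  "tree_d (dend_htpy (1, xs)) + lin_ext dend_htpy (dend_d_basis dtree_prec dtree_succ (1, xs))
   = (Poly_Mapping.single (1, xs) 1 :: _ \<Rightarrow>\<^sub>0 'k::comm_ring_1)"
proof -
  let ?ys = "split_at 0 xs (Node Leaf v Leaf) \<beta>"
  have "length ?ys = n + 1"
    using length_split_at[of 0 xs] len n1 by simp
  then have d_htpy: "tree_d (dend_htpy (1, xs)) = smult ((-1) ^ (1 + 1))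
      (\<Sum>j\<in>{1..<n + 1}. smult ((-1) ^ (j + 1)) (tree_face j (1, ?ys)) :: _ \<Rightarrow>\<^sub>0 'k)"
  proof -
    have "(-1::'k) ^ (1 + 1) = 1" by simp
    with \<open>length ?ys = n + 1\<close> show ?thesis
      by (simp only: dend_htpy_prec_split[OF xs_r right_not_Leaf] dend_d_single_alt)
  qed
  show ?thesis
    unfolding d_htpy lin_ext_dend_d_basis len
  proof (rule homotopy_signed_sums[where F = "\<lambda>j. tree_face j (1, ?ys)"
        and H = "\<lambda>i. lin_ext dend_htpy (tree_face i (1, xs))", OF _ n1 face_split_prec])
    fix i assume i: "1 \<le> i" "i < n"
    show "lin_ext dend_htpy (tree_face i (1, xs))
        = smult ((-1) ^ (1 + 1)) (tree_face (i + 1) (1, ?ys) :: _ \<Rightarrow>\<^sub>0 'k)"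
    proof (cases "i = 1")
      case True
      then show ?thesis using htpy_face_split_prec_first i by simp
    next
      case False
      with i show ?thesis by (intro htpy_face_split_prec_above) auto
    qed
  qed simp_all
qed

end




context
  fixes xs :: "'b tree list" and n r :: nat and \<beta> :: "'b tree" and v :: 'b
  assumes len: "length xs = n" and r1: "1 \<le> r" and rn: "r \<le> n" and not_Leaf: "Leaf \<notin> set xs"
    and xs_r: "xs ! (r - 1) = Node Leaf v \<beta>"
begin

lemma htpy_face_no_split_prev: assumes r_ge_2: "2 \<le> r"
  shows "lin_ext dend_htpy (tree_face (r - 1) (r, xs))
      = (Poly_Mapping.single (r, xs) ((-1) ^ r) :: _ \<Rightarrow>\<^sub>0 'k::comm_ring_1)"
proof -
  obtain m where m: "r = Suc (Suc m)" using r_ge_2 by (cases r; cases "r - 1") auto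
  let ?a = "xs ! m"
  have "m < length xs" using len rn m by simp
  then have left_not_Leaf: "?a \<noteq> Leaf" using not_Leaf nth_mem by force
  have xs_r': "xs ! Suc m = Node Leaf v \<beta>" using xs_r m by simp
  have "lin_ext dend_htpy (tree_face (r - 1) (r, xs))
      = dend_htpy (Suc m, join_at (Suc m) xs (Node ?a v \<beta>))"
    by (simp add: dend_face_join_at m dend_di_r_def dend_circ_succ xs_r' dtree_succ_left_Leaf)
  also have "\<dots> = Poly_Mapping.single (Suc (Suc m), split_at m (join_at (Suc m) xs (Node ?a v \<beta>)) ?a
      (Node Leaf v \<beta>)) ((-1) ^ Suc (Suc m))"
  proof -
    have "join_at (Suc m) xs (Node ?a v \<beta>) ! m = Node ?a v \<beta>"
        using nth_join_at[of "Suc m" xs m] len rn m by simp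
    then show ?thesis using dend_htpy_succ_split[of "join_at (Suc m) xs (Node ?a v \<beta>)"
        "Suc m" ?a v \<beta>] left_not_Leaf by simp
  qed
  also have "split_at m (join_at (Suc m) xs (Node ?a v \<beta>)) ?a (Node Leaf v \<beta>) = xs"
    using split_at_join_at[of "Suc m" xs "Node ?a v \<beta>"] xs_r' len rn m by simp
  finally show ?thesis using m by simp
qed

lemma htpy_face_no_split_other: assumes r_ge_2: "2 \<le> r" and i: "1 \<le> i" "i < n" "i \<noteq> r - 1"
  shows "lin_ext dend_htpy (tree_face i (r, xs)) = (0 :: _ \<Rightarrow>\<^sub>0 'k::comm_ring_1)"
proof -
  obtain m where m: "r = Suc (Suc m)" using r_ge_2 by (cases r; cases "r - 1") auto
  obtain j where j: "i = Suc j" using i by (cases i) auto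
  have xs_r': "xs ! Suc m = Node Leaf v \<beta>" using xs_r m by simp
  consider "i < r - 1" | "i = r" | "r < i" using i by linarith
  then show ?thesis
  proof cases
    case 1
    have "dend_htpy (Suc m, join_at i xs t) = (0 :: _ \<Rightarrow>\<^sub>0 'k)" for t
    proof -
      have "\<not> m < i - 1" "m \<noteq> i - 1" "m < length xs - 1" using len rn m i 1 by auto
      then have "join_at i xs t ! m = Node Leaf v \<beta>" using nth_join_at[of i xs m] len rn m i 1 xs_r'
          by simp
      moreover have "0 < m" using 1 i m by simp
      ultimately show ?thesis using dend_htpy_no_split[of "join_at i xs t" "Suc m" v \<beta>] by simp
    qed
    then show ?thesis using 1 by (simp add: lin_ext_dend_face m dend_di_r_def)
  next
    case 2
    have "dend_htpy (Suc (Suc m), join_at i xs (Node Leaf v g)) = (0 :: _ \<Rightarrow>\<^sub>0 'k)" for g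
    proof -
      have "join_at i xs (Node Leaf v g) ! Suc m = Node Leaf v g"
          using nth_join_at[of i xs "Suc m"] len i m 2 by simp
      then show ?thesis using dend_htpy_no_split[of "join_at i xs (Node Leaf v g)"
          "Suc (Suc m)" v g] by simp
    qed
    then show ?thesis using 2
      by (simp add: lin_ext_dend_face m dend_di_r_def dend_circ_prec xs_r' dtree_prec_Node
          lin_ext_graft_map)
  next
    case 3
    have "dend_htpy (Suc (Suc m), join_at i xs t) = (0 :: _ \<Rightarrow>\<^sub>0 'k)" for t
    proof -
      have "Suc m < i - 1" "Suc m < length xs - 1" using len i m 3 by auto
      then have "join_at i xs t ! Suc m = Node Leaf v \<beta>"
          using nth_join_at[of i xs "Suc m"] len i m 3 xs_r' by simp
      then show ?thesis using dend_htpy_no_split[of "join_at i xs t" "Suc (Suc m)" v \<beta>] by simp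
    qed
    then show ?thesis using 3 by (simp add: lin_ext_dend_face m dend_di_r_def)
  qed
qed

lemma htpy_face_no_split_first: assumes r_eq_1: "r = 1" and right_Leaf: "\<beta>
    = Leaf" and n_gt_1: "1 < n"
  shows "lin_ext dend_htpy (tree_face 1 (r, xs)) = (Poly_Mapping.single
      (r, xs) 1 :: _ \<Rightarrow>\<^sub>0 'k::comm_ring_1)"
proof -
  let ?b = "xs ! 1"
  have "1 < length xs" using len n_gt_1 by simp
  then have right_not_Leaf: "?b \<noteq> Leaf" using not_Leaf nth_mem by force
  have xs_r': "xs ! 0 = Node Leaf v Leaf" using xs_r r_eq_1 right_Leaf by simp
  have "lin_ext dend_htpy (tree_face 1 (r, xs)) = dend_htpy (1, join_at 1 xs (Node Leaf v ?b))"
    by (simp add: dend_face_join_at r_eq_1 dend_di_r_def dend_circ_prec xs_r' dtree_prec_right_Leaf)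
  also have "\<dots> = Poly_Mapping.single (1, split_at 0 (join_at 1 xs (Node Leaf v ?b))
      (Node Leaf v Leaf) ?b) 1"
  proof -
    have "join_at 1 xs (Node Leaf v ?b) ! 0 = Node Leaf v ?b"
        using nth_join_at[of 1 xs 0] len n_gt_1 by simp
    then show ?thesis using dend_htpy_prec_split[of "join_at 1 xs
        (Node Leaf v ?b)" v ?b] right_not_Leaf by simp
  qed
  also have "split_at 0 (join_at 1 xs (Node Leaf v ?b)) (Node Leaf v Leaf) ?b = xs"
    using split_at_join_at[of 1 xs "Node Leaf v ?b"] xs_r' len n_gt_1 by simp
  finally show ?thesis using r_eq_1 by simp
qed

lemma htpy_face_no_split_above: assumes r_eq_1: "r = 1" and right_Leaf: "\<beta> = Leaf" and i: "1 < i"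
    "i < n"
  shows "lin_ext dend_htpy (tree_face i (r, xs)) = (0 :: _ \<Rightarrow>\<^sub>0 'k::comm_ring_1)"
proof -
  have xs_r': "xs ! 0 = Node Leaf v Leaf" using xs_r r_eq_1 right_Leaf by simp
  have "dend_htpy (1, join_at i xs t) = (0 :: _ \<Rightarrow>\<^sub>0 'k)" for t
  proof -
    have "join_at i xs t ! 0 = Node Leaf v Leaf" using nth_join_at[of i xs 0] len i xs_r' by simp
    then show ?thesis using dend_htpy_no_split[of "join_at i xs t" 1 v Leaf] by simp
  qed
  then show ?thesis using i r_eq_1 by (simp add: lin_ext_dend_face dend_di_r_def)
qed


lemma htpy_faces_no_split_r_ge_2:
  assumes "2 \<le> r"
  shows "(\<Sum>i\<in>{1..<n}. smult ((-1) ^ (i + 1)) (lin_ext dend_htpy (tree_face i (r, xs))))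
       = (Poly_Mapping.single (r, xs) 1 :: _ \<Rightarrow>\<^sub>0 'k::comm_ring_1)"
proof -
  have "(\<Sum>i\<in>{1..<n}. smult ((-1) ^ (i + 1)) (lin_ext dend_htpy (tree_face i (r, xs))))
      = smult ((-1) ^ (r - 1 + 1)) (lin_ext dend_htpy (tree_face (r - 1) (r, xs)) :: _ \<Rightarrow>\<^sub>0 'k)"
    by (rule sum_eq_single) (use assms rn in \<open>auto simp: htpy_face_no_split_other\<close>)
  moreover have "lin_ext dend_htpy (tree_face (r - 1) (r, xs))
      = (Poly_Mapping.single (r, xs) ((-1) ^ r) :: _ \<Rightarrow>\<^sub>0 'k)"
    by (rule htpy_face_no_split_prev[OF assms])
  moreover have "(-1::'k) ^ r * (-1) ^ r = 1"
    by (simp flip: power_mult_distrib)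
  ultimately show ?thesis
    using assms by (simp add: smult_single)
qed

lemma htpy_faces_no_split_first:
  assumes r_eq_1: "r = 1" and right_Leaf: "\<beta> = Leaf" and n_gt_1: "1 < n"
  shows "(\<Sum>i\<in>{1..<n}. smult ((-1) ^ (i + 1)) (lin_ext dend_htpy (tree_face i (r, xs))))
       = (Poly_Mapping.single (r, xs) 1 :: _ \<Rightarrow>\<^sub>0 'k::comm_ring_1)"
proof -
  have "(\<Sum>i\<in>{1..<n}. smult ((-1) ^ (i + 1)) (lin_ext dend_htpy (tree_face i (r, xs))))
      = smult ((-1) ^ (1 + 1)) (lin_ext dend_htpy (tree_face 1 (r, xs)) :: _ \<Rightarrow>\<^sub>0 'k)"
    by (rule sum_eq_single)
      (use n_gt_1 in \<open>auto simp: htpy_face_no_split_above[OF r_eq_1 right_Leaf]\<close>)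
  then show ?thesis
    using htpy_face_no_split_first[OF r_eq_1 right_Leaf n_gt_1] by simp
qed

lemma htpy_identity_no_split:
  assumes "r \<noteq> 1 \<or> \<beta> = Leaf"
  shows "tree_d (dend_htpy (r, xs)) + lin_ext dend_htpy (dend_d_basis dtree_prec dtree_succ (r, xs))
       = (if single_vertex xs then 0 else Poly_Mapping.single (r, xs) 1 :: _ \<Rightarrow>\<^sub>0 'k::comm_ring_1)"
proof -
  have "tree_d (dend_htpy (r, xs)) = (0 :: _ \<Rightarrow>\<^sub>0 'k)"
    by (simp add: dend_d_def dend_htpy_no_split[OF xs_r assms])
  moreover have "(\<Sum>i\<in>{1..<n}. smult ((-1) ^ (i + 1)) (lin_ext dend_htpy (tree_face i (r, xs))))
      = (if single_vertex xs then 0 else Poly_Mapping.single (r, xs) 1 :: _ \<Rightarrow>\<^sub>0 'k)"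
  proof (cases "2 \<le> r")
    case True
    then have "\<not> single_vertex xs" using rn len by (auto simp: single_vertex_def)
    with htpy_faces_no_split_r_ge_2[OF True] show ?thesis by simp
  next
    case False
    then have r_eq_1: "r = 1" and right_Leaf: "\<beta> = Leaf" using r1 assms by auto
    show ?thesis
    proof (cases "n = 1")
      case True
      then have "xs = [Node Leaf v Leaf]" using len xs_r r_eq_1 right_Leaf by (cases xs) auto
      then show ?thesis using True by (simp add: single_vertex_def)
    next
      case False
      then have "1 < n" using rn r_eq_1 by simp
      moreover have "\<not> single_vertex xs" using len False by (auto simp: single_vertex_def)
      ultimately show ?thesis using htpy_faces_no_split_first[OF r_eq_1 right_Leaf] by simp
    qed
  qed
  ultimately show ?thesis
    by (simp add: lin_ext_dend_d_basis len)
qed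

end

lemma dend_htpy_identity_basis:
  assumes len: "length xs = n" and r: "1 \<le> r" "r \<le> n" and not_Leaf: "Leaf \<notin> set xs"
  shows "tree_d (dend_htpy (r, xs)) + lin_ext dend_htpy (dend_d_basis dtree_prec dtree_succ (r, xs))
       = (if single_vertex xs then 0 else Poly_Mapping.single (r, xs) (1::'k::comm_ring_1))"
proof -
  have "xs ! (r - 1) \<in> set xs" using len r by simp
  then have "xs ! (r - 1) \<noteq> Leaf" using not_Leaf by metis
  then obtain \<alpha> v \<beta> where xs_r: "xs ! (r - 1) = Node \<alpha> v \<beta>"
    by (cases "xs ! (r - 1)") auto
  consider (succ) "\<alpha> \<noteq> Leaf" | (prec) "\<alpha> = Leaf" "r = 1" "\<beta> \<noteq> Leaf"
    | (none) "\<alpha> = Leaf" "r \<noteq> 1 \<or> \<beta> = Leaf"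
    by blast
  then show ?thesis
  proof cases
    case succ
    then have "\<not> single_vertex xs" using xs_r len r by (auto simp: single_vertex_def)
    with htpy_identity_split_succ[OF len r not_Leaf xs_r succ] show ?thesis by simp
  next
    case prec
    then have "\<not> single_vertex xs" using xs_r by (auto simp: single_vertex_def)
    with prec htpy_identity_split_prec[OF len _ not_Leaf _ prec(3), of v] xs_r r show ?thesis
        by simp
  next
    case none
    with htpy_identity_no_split[OF len r not_Leaf, of v \<beta>] xs_r show ?thesis by simp
  qed
qed

lemma dend_htpy_identity:
  assumes c: "c \<in> dend_C (dend_basis B) n"
  shows "tree_d (lin_ext dend_htpy c) + lin_ext dend_htpy (tree_d c)
       = c - lin_ext (\<lambda>k. if single_vertex (snd k) then Poly_Mapping.single k 1 else 0)
               (c :: _ \<Rightarrow>\<^sub>0 'k::comm_ring_1)"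
proof -
  have "tree_d (lin_ext dend_htpy c) + lin_ext dend_htpy (tree_d c)
      = lin_ext (\<lambda>k. tree_d (dend_htpy k) + lin_ext dend_htpy
          (dend_d_basis dtree_prec dtree_succ k)) c"
    unfolding lin_ext_fun_add dend_d_def[of dtree_prec dtree_succ] lin_ext_comp ..
  also have "\<dots> = lin_ext (\<lambda>k. if single_vertex (snd k) then 0 else Poly_Mapping.single k 1) c"
  proof (rule lin_ext_cong)
    fix k assume k: "k \<in> Poly_Mapping.keys c"
    obtain r xs where kr: "k = (r, xs)" by (cases k)
    have v: "1 \<le> r" "r \<le> n" "length xs = n" "set xs \<subseteq> dend_basis B"
      using keys_dend_C[OF c k] kr by auto
    then have "Leaf \<notin> set xs" by (auto simp: dend_basis_def)
    then show "tree_d (dend_htpy k) + lin_ext dend_htpy (dend_d_basis dtree_prec dtree_succ k)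
        = (if single_vertex (snd k) then 0 else Poly_Mapping.single k 1)"
      unfolding kr snd_conv by (rule dend_htpy_identity_basis[OF v(3,1,2)])
  qed
  also have "\<dots> = lin_ext (\<lambda>k. Poly_Mapping.single k 1
      + - (if single_vertex (snd k) then Poly_Mapping.single k 1 else 0)) c"
    by (rule lin_ext_cong) simp
  also have "\<dots> = c - lin_ext (\<lambda>k. if single_vertex (snd k) then Poly_Mapping.single k 1 else 0) c"
    by (simp only: lin_ext_fun_add lin_ext_fun_uminus lin_ext_id diff_conv_add_uminus)
  finally show ?thesis .
qed

lemma keys_dend_htpy:
  assumes "length xs = n" "1 \<le> r" "r \<le> n" "set xs \<subseteq> dend_basis B"
    and q: "q \<in> Poly_Mapping.keys (dend_htpy (r, xs) :: _ \<Rightarrow>\<^sub>0 'k::comm_ring_1)"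
  shows "1 \<le> fst q \<and> fst q \<le> Suc n \<and> length (snd q) = Suc n \<and> set (snd q) \<subseteq> dend_basis B"
proof -
  have "xs ! (r - 1) \<in> dend_basis B" using assms by (auto simp: subset_iff)
  then obtain \<alpha> v \<beta> where xs_r: "xs ! (r - 1) = Node \<alpha> v \<beta>"
    and sets: "set_tree \<alpha> \<subseteq> B" "v \<in> B" "set_tree \<beta> \<subseteq> B"
    by (cases "xs ! (r - 1)") (auto simp: dend_basis_def)
  from q xs_r have "(\<alpha> \<noteq> Leaf \<and> q = (r + 1, split_at (r - 1) xs \<alpha> (Node Leaf v \<beta>)))
      \<or> (\<beta> \<noteq> Leaf \<and> q = (1, split_at 0 xs (Node Leaf v Leaf) \<beta>))"
    by (auto simp: dend_htpy_def split: if_splits)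
  moreover have "Node Leaf v \<beta> \<in> dend_basis B" "Node Leaf v Leaf \<in> dend_basis B"
    "\<alpha> \<noteq> Leaf \<Longrightarrow> \<alpha> \<in> dend_basis B" "\<beta> \<noteq> Leaf \<Longrightarrow> \<beta> \<in> dend_basis B"
    using sets by (auto simp: dend_basis_def)
  moreover have "r - 1 < length xs" "0 < length xs" using assms by auto
  ultimately show ?thesis
    using assms(1-4) set_split_at[of "r - 1" xs \<alpha> "Node Leaf v \<beta>"]
      set_split_at[of 0 xs "Node Leaf v Leaf" \<beta>] length_split_at[of
          "r - 1" xs] length_split_at[of 0 xs]
    by (elim disjE conjE) (simp_all, blast+)
qed

lemma dend_htpy_dend_C:
  assumes c: "c \<in> dend_C (dend_basis B) n"
  shows "(lin_ext dend_htpy c :: _ \<Rightarrow>\<^sub>0 'k::comm_ring_1) \<in> dend_C (dend_basis B) (Suc n)"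
proof -
  have "q \<in> {(r, xs). 1 \<le> r \<and> r \<le> Suc n \<and> length xs = Suc n \<and> set xs \<subseteq> dend_basis B}"
    if q: "q \<in> Poly_Mapping.keys (lin_ext dend_htpy c :: _ \<Rightarrow>\<^sub>0 'k)" for q
  proof -
    obtain k where k: "k \<in> Poly_Mapping.keys c" "q \<in> Poly_Mapping.keys (dend_htpy k :: _ \<Rightarrow>\<^sub>0 'k)"
      using q keys_lin_ext[of dend_htpy c] by blast
    then show ?thesis
      using keys_dend_C[OF c k(1)] keys_dend_htpy[of "snd k" n "fst k" B q] by (cases q) auto
  qed
  then show ?thesis unfolding dend_C_def fspan_def by blast
qed

lemma free_dend_Z_eq_B:
  assumes "1 < n"
  shows "dend_Z (dend_basis B) (dtree_prec :: _ \<Rightarrow> _ \<Rightarrow> 'b tree \<Rightarrow>\<^sub>0 'k::comm_ring_1) dtree_succ n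
       = dend_B (dend_basis B) dtree_prec dtree_succ n"
proof
  show "dend_Z (dend_basis B) dtree_prec dtree_succ n
      \<subseteq> dend_B (dend_basis B) (dtree_prec :: _ \<Rightarrow> _ \<Rightarrow> 'b tree \<Rightarrow>\<^sub>0 'k) dtree_succ n"
  proof
    fix c :: "(nat \<times> 'b tree list) \<Rightarrow>\<^sub>0 'k"
    assume "c \<in> dend_Z (dend_basis B) dtree_prec dtree_succ n"
    then have c: "c \<in> dend_C (dend_basis B) n" and dc: "tree_d c = 0"
      by (auto simp: dend_Z_def)
    have "\<not> single_vertex (snd k)" if "k \<in> Poly_Mapping.keys c" for k
      using keys_dend_C[OF c that] assms by (auto simp: single_vertex_def)
    then have "lin_ext (\<lambda>k. if single_vertex (snd k) then Poly_Mapping.single k 1 else 0) c = 0"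
      by (subst lin_ext_cong[where g = "\<lambda>_. 0"]) auto
    then have "c = tree_d (lin_ext dend_htpy c)"
      using dend_htpy_identity[OF c] dc by simp
    with dend_htpy_dend_C[OF c] show "c \<in> dend_B (dend_basis B) dtree_prec dtree_succ n"
      unfolding dend_B_def by blast
  qed
  show "dend_B (dend_basis B) dtree_prec dtree_succ n
      \<subseteq> dend_Z (dend_basis B) (dtree_prec :: _ \<Rightarrow> _ \<Rightarrow> 'b tree \<Rightarrow>\<^sub>0 'k) dtree_succ n"
    by (rule dendriform_with_basis.dend_B_subset_dend_Z[OF dendriform_with_basis_dtree])
qed

subsection \<open>Degree one\<close>

fun vertex_label :: "'b tree list \<Rightarrow> ('b \<Rightarrow>\<^sub>0 'k::comm_ring_1)" where
  "vertex_label [Node Leaf v Leaf] = Poly_Mapping.single v 1"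
| "vertex_label _ = 0"

definition dend_aug :: "((nat \<times> 'b tree list) \<Rightarrow>\<^sub>0 'k::comm_ring_1) \<Rightarrow> ('b \<Rightarrow>\<^sub>0 'k)" where
  "dend_aug c = lin_ext (\<lambda>k. vertex_label (snd k)) c"

lemma vertex_label_not_single_vertex: "\<not> single_vertex xs \<Longrightarrow> vertex_label xs = 0"
  by (cases xs rule: vertex_label.cases) (auto simp: single_vertex_def)

lemma linear_on_dend_aug: "linear_on S dend_aug"
  by (simp add: linear_on_def dend_aug_def lin_ext_add lin_ext_smult)

lemma dend_aug_image: "dend_aug ` dend_C (dend_basis B) 1
    = (fspan B :: ('b \<Rightarrow>\<^sub>0 'k::comm_ring_1) set)"
proof (intro equalityI subsetI)
  fix p :: "'b \<Rightarrow>\<^sub>0 'k"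
  assume "p \<in> dend_aug ` dend_C (dend_basis B) 1"
  then obtain c where c: "c \<in> dend_C (dend_basis B) 1" and p: "p = dend_aug c"
    by blast
  have "Poly_Mapping.keys (vertex_label (snd k) :: 'b \<Rightarrow>\<^sub>0 'k) \<subseteq> B"
    if "k \<in> Poly_Mapping.keys c" for k
    using keys_dend_C[OF c that]
    by (cases "snd k" rule: vertex_label.cases) (auto simp: dend_basis_def)
  then show "p \<in> fspan B"
    using keys_lin_ext[of "\<lambda>k. vertex_label (snd k)" c]
        by (fastforce simp: p fspan_def dend_aug_def)
next
  fix p :: "'b \<Rightarrow>\<^sub>0 'k"
  assume p: "p \<in> fspan B"
  define c where "c = lin_ext (\<lambda>v. Poly_Mapping.single (1::nat, [Node Leaf v Leaf]) (1::'k)) p"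
  have "Poly_Mapping.keys c \<subseteq> (\<lambda>v. (1, [Node Leaf v Leaf])) ` Poly_Mapping.keys p"
    using keys_lin_ext[of "\<lambda>v. Poly_Mapping.single (1::nat, [Node Leaf v Leaf]) (1::'k)" p]
    by (auto simp: c_def)
  then have "c \<in> dend_C (dend_basis B) 1"
    using p by (force simp: dend_C_def fspan_def dend_basis_def)
  moreover have "dend_aug c = p"
    unfolding c_def dend_aug_def lin_ext_comp by (simp add: lin_ext_id)
  ultimately show "p \<in> dend_aug ` dend_C (dend_basis B) 1"
    by (metis image_eqI)
qed

lemma not_single_vertex_keys_dend_circ:
  assumes "a \<noteq> Leaf" "b \<noteq> Leaf"
    and t: "t \<in> Poly_Mapping.keys (tree_circ i r a b :: _ \<Rightarrow>\<^sub>0 'k::comm_ring_1)"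
  shows "\<not> single_vertex [t]"
proof -
  have "t \<in> Poly_Mapping.keys (dtree_prec a b :: _ \<Rightarrow>\<^sub>0 'k) \<union> Poly_Mapping.keys
      (dtree_succ a b :: _ \<Rightarrow>\<^sub>0 'k)"
    using t keys_add[of "dtree_prec a b :: _ \<Rightarrow>\<^sub>0 'k" "dtree_succ a b"]
    by (auto simp: dend_circ_def split: if_splits)
  then show ?thesis
    using keys_dtree_prec[of t a b] keys_dtree_succ[of t a b] assms
    by (auto simp: single_vertex_def)
qed

lemma dend_aug_dend_d:
  assumes y: "y \<in> dend_C (dend_basis B) 2"
  shows "dend_aug (tree_d y :: _ \<Rightarrow>\<^sub>0 'k::comm_ring_1) = 0"
proof -
  have "dend_aug (dend_d_basis dtree_prec dtree_succ k :: _ \<Rightarrow>\<^sub>0 'k) = 0"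
    if k: "k \<in> Poly_Mapping.keys y" for k
  proof -
    obtain r a b where kr: "k = (r, [a, b])" and ab: "a \<noteq> Leaf" "b \<noteq> Leaf"
      using keys_dend_C[OF y k]
      by (cases k) (auto simp: numeral_2_eq_2 length_Suc_conv dend_basis_def)
    have "dend_aug (dend_d_basis dtree_prec dtree_succ k :: _ \<Rightarrow>\<^sub>0 'k)
        = lin_ext (\<lambda>t. vertex_label [t]) (tree_circ 1 r a b :: _ \<Rightarrow>\<^sub>0 'k)"
      by (simp add: kr dend_d_basis_alt dend_aug_def lin_ext_dend_face join_at_def)
    also have "\<dots> = 0"
      using not_single_vertex_keys_dend_circ[OF ab] vertex_label_not_single_vertex
      by (subst lin_ext_cong[where g = "\<lambda>_. 0"]) auto
    finally show ?thesis .
  qed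
  then show ?thesis
    unfolding dend_aug_def dend_d_def lin_ext_comp
    by (subst lin_ext_cong[where g = "\<lambda>_. 0"]) (auto simp flip: dend_aug_def)
qed

lemma single_vertex_part_dend_aug:
  assumes c: "c \<in> dend_C Bas 1"
  shows "lin_ext (\<lambda>k. if single_vertex (snd k) then Poly_Mapping.single k 1 else 0) c
       = lin_ext (\<lambda>v. Poly_Mapping.single (1, [Node Leaf v Leaf]) 1)
           (dend_aug c :: _ \<Rightarrow>\<^sub>0 'k::comm_ring_1)"
  unfolding dend_aug_def lin_ext_comp
proof (rule lin_ext_cong)
  fix k assume k: "k \<in> Poly_Mapping.keys c"
  then obtain xs where kr: "k = (1, xs)"
    using keys_dend_C[OF c k] by (cases k) auto
  show "(if single_vertex (snd k) then Poly_Mapping.single k 1 else 0)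
      = lin_ext (\<lambda>v. Poly_Mapping.single (1, [Node Leaf v Leaf]) 1)
          (vertex_label (snd k) :: _ \<Rightarrow>\<^sub>0 'k)"
    by (cases "single_vertex xs")
      (auto simp: kr single_vertex_def vertex_label_not_single_vertex)
qed

lemma dend_aug_kernel:
  "{c \<in> dend_C (dend_basis B) 1. dend_aug c = 0}
   = dend_B (dend_basis B) (dtree_prec :: _ \<Rightarrow> _ \<Rightarrow> 'b tree \<Rightarrow>\<^sub>0 'k::comm_ring_1) dtree_succ 1"
proof
  show "{c \<in> dend_C (dend_basis B) 1. dend_aug c = 0}
      \<subseteq> dend_B (dend_basis B) (dtree_prec :: _ \<Rightarrow> _ \<Rightarrow> 'b tree \<Rightarrow>\<^sub>0 'k) dtree_succ 1"
  proof clarify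
    fix c :: "(nat \<times> 'b tree list) \<Rightarrow>\<^sub>0 'k"
    assume c: "c \<in> dend_C (dend_basis B) 1" and "dend_aug c = 0"
    then have "c = tree_d (lin_ext dend_htpy c)"
      using dend_htpy_identity[OF c] single_vertex_part_dend_aug[OF c] dend_d_dend_C_1[OF c] by simp
    with dend_htpy_dend_C[OF c] show "c \<in> dend_B (dend_basis B) dtree_prec dtree_succ 1"
      unfolding dend_B_def by blast
  qed
  show "dend_B (dend_basis B) (dtree_prec :: _ \<Rightarrow> _ \<Rightarrow> 'b tree \<Rightarrow>\<^sub>0 'k) dtree_succ 1
      \<subseteq> {c \<in> dend_C (dend_basis B) 1. dend_aug c = 0}"
    using dendriform_with_basis.d_dend_C[OF dendriform_with_basis_dtree] dend_aug_dend_d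
    by (auto simp: dend_B_def numeral_2_eq_2)
qed

theorem theorem6p5:
  fixes B :: "'b set"
  shows "(\<exists>\<phi> :: ((nat \<times> 'b tree list) \<Rightarrow>\<^sub>0 'k::field_char_0) \<Rightarrow> ('b \<Rightarrow>\<^sub>0 'k).
            linear_on (dend_Z (dend_basis B) dtree_prec dtree_succ 1) \<phi>
          \<and> \<phi> ` dend_Z (dend_basis B) dtree_prec dtree_succ 1 = fspan B
          \<and> {c \<in> dend_Z (dend_basis B) dtree_prec dtree_succ 1. \<phi> c = 0}
              = dend_B (dend_basis B) (dtree_prec :: _ \<Rightarrow> _ \<Rightarrow> ('b tree \<Rightarrow>\<^sub>0 'k)) dtree_succ 1)
       \<and> (\<forall>n>1. dend_Z (dend_basis B) (dtree_prec :: _ \<Rightarrow> _ \<Rightarrow> ('b tree \<Rightarrow>\<^sub>0 'k)) dtree_succ n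
               = dend_B (dend_basis B) dtree_prec dtree_succ n)"
proof (intro conjI allI impI exI)
  show "linear_on (dend_Z (dend_basis B) dtree_prec dtree_succ 1) dend_aug"
    by (rule linear_on_dend_aug)
  show "dend_aug ` dend_Z (dend_basis B) (dtree_prec :: _ \<Rightarrow> _ \<Rightarrow> ('b tree \<Rightarrow>\<^sub>0 'k)) dtree_succ 1
      = fspan B"
    by (simp only: dend_Z_1 dend_aug_image)
  show "{c \<in> dend_Z (dend_basis B) dtree_prec dtree_succ 1. dend_aug c = 0}
      = dend_B (dend_basis B) (dtree_prec :: _ \<Rightarrow> _ \<Rightarrow> ('b tree \<Rightarrow>\<^sub>0 'k)) dtree_succ 1"
    by (simp only: dend_Z_1 dend_aug_kernel)
  fix n :: nat
  assume "n > 1"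
  then show "dend_Z (dend_basis B) (dtree_prec :: _ \<Rightarrow> _ \<Rightarrow> ('b tree \<Rightarrow>\<^sub>0 'k)) dtree_succ n
      = dend_B (dend_basis B) dtree_prec dtree_succ n"
    by (rule free_dend_Z_eq_B)
qed

end
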